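(* Let $C$ be the middle-thirds Cantor set, i.e. the limit set of the IFS $u_0(x)=x/3$, $u_2(x)=x/3+2/3$, let $\delta=\log2/\log3$ and $\mu=\mathcal{H}^\delta|_C/\mathcal{H}^\delta(C)$. Then for every $\varepsilon>0$, $\mu$-almost every $x\in C$ is badly symbolically approximable with respect to $\psi(q)=(\log q)^{-(2/\delta+\varepsilon)}$, and $\mu$-almost every $x\in C$ is symbolically well approximable with respect to $\psi(q)=(\log q)^{-2/\delta}$.
   Context: For a rational $p/q\in C$, let $\omega\in\{0,2\}^{\mathbb{N}}$ be its (unique) coding, i.e. $p/q=\sum_i\omega_i3^{-i}$; it is eventually periodic. With $n\ge0$ minimal such that $(\omega_i)_{i>n}$ is periodic and $m\ge1$ its minimal period, the intrinsic denominator is $q_{\mathrm{int}}:=3^n(3^m-1)$. A point $x\in C$ is badly symbolically approximable w.r.t. $\psi$ if there is $\varepsilon>0$ with $|x-p/q|\ge\varepsilon\psi(q_{\mathrm{int}})/q_{\mathrm{int}}$ for all $p/q\in\mathbb{Q}\cap C$; otherwise it is symbolically well approximable w.r.t. $\psi$. *)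

theory Defs
  imports "HOL-Analysis.Analysis"
begin

text \<open>A coding is a sequence w :: nat => real with values in {0,2}; w i stands
  for the paper's digit omega_(i+1), so the point coded is sum_i w i / 3^(i+1).\<close>

definition u0 :: "real \<Rightarrow> real" where "u0 x = x / 3"
definition u2 :: "real \<Rightarrow> real" where "u2 x = x / 3 + 2 / 3"

definition is_coding :: "(nat \<Rightarrow> real) \<Rightarrow> bool" where
  "is_coding w \<longleftrightarrow> (\<forall>i. w i \<in> {0, 2})"

definition coding_point :: "(nat \<Rightarrow> real) \<Rightarrow> real" where
  "coding_point w = (\<Sum>i. w i / 3 ^ (i + 1))"

definition cantor :: "real set" where
  "cantor = {x. \<exists>w. is_coding w \<and> x = coding_point w}"

definition coding_of :: "real \<Rightarrow> (nat \<Rightarrow> real)" where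
  "coding_of x = (THE w. is_coding w \<and> x = coding_point w)"

text \<open>(w_j)_{j >= n} is periodic with period m >= 1 (i.e. the paper's
  (omega_i)_{i>n} is periodic with period m).\<close>
definition periodic_from :: "(nat \<Rightarrow> real) \<Rightarrow> nat \<Rightarrow> nat \<Rightarrow> bool" where
  "periodic_from w n m \<longleftrightarrow> m \<ge> 1 \<and> (\<forall>j\<ge>n. w (j + m) = w j)"

definition preperiod :: "(nat \<Rightarrow> real) \<Rightarrow> nat" where
  "preperiod w = (LEAST n. \<exists>m. periodic_from w n m)"

definition min_period :: "(nat \<Rightarrow> real) \<Rightarrow> nat" where
  "min_period w = (LEAST m. periodic_from w (preperiod w) m)"

definition q_int :: "real \<Rightarrow> nat" where
  "q_int r = 3 ^ preperiod (coding_of r) * (3 ^ min_period (coding_of r) - 1)"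

definition badly_symb_approx :: "(real \<Rightarrow> real) \<Rightarrow> real \<Rightarrow> bool" where
  "badly_symb_approx \<psi> x \<longleftrightarrow>
     (\<exists>\<epsilon>>0. \<forall>r \<in> \<rat> \<inter> cantor.
        \<bar>x - r\<bar> \<ge> \<epsilon> * \<psi> (real (q_int r)) / real (q_int r))"

definition symb_well_approx :: "(real \<Rightarrow> real) \<Rightarrow> real \<Rightarrow> bool" where
  "symb_well_approx \<psi> x \<longleftrightarrow> \<not> badly_symb_approx \<psi> x"

text \<open>s-dimensional Hausdorff (outer) measure on the reals.
  Covers use bounded sets (Isabelle's diameter is 0 for unbounded sets).\<close>
definition hausdorff_pre :: "real \<Rightarrow> real \<Rightarrow> real set \<Rightarrow> ennreal" where
  "hausdorff_pre s r A =
     (INF U \<in> {U :: nat \<Rightarrow> real set. A \<subseteq> (\<Union>i. U i) \<and>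
                 (\<forall>i. bounded (U i) \<and> diameter (U i) \<le> r)}.
        (\<Sum>i. ennreal (diameter (U i) powr s)))"

definition hausdorff :: "real \<Rightarrow> real set \<Rightarrow> ennreal" where
  "hausdorff s A = (SUP r \<in> {0<..}. hausdorff_pre s r A)"

definition cantor_dim :: real where
  "cantor_dim = ln 2 / ln 3"

definition cantor_mu :: "real set \<Rightarrow> ennreal" where
  "cantor_mu A = hausdorff cantor_dim (A \<inter> cantor) / hausdorff cantor_dim cantor"

definition mu_ae :: "(real \<Rightarrow> bool) \<Rightarrow> bool" where
  "mu_ae P \<longleftrightarrow> cantor_mu {x \<in> cantor. \<not> P x} = 0"

end

theory Submission
  imports Defs
begin

text \<open>Both halves are covering arguments for the dim-dimensional Hausdorff measure on the
  coding space {0,2}^\<nat>, where the cylinder of a word of length K has measure 2^-K.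
  A rational point of the Cantor set has an eventually periodic coding; with preperiod n and
  period m there are at most 2^(n+m) such points and their intrinsic denominator is about
  3^(n+m). For \<psi>(q) = (log q)^-c the \<psi>(Q)/Q-neighbourhoods of these points lie in 2^(n+m)
  cylinders of total measure about (n + m)^(-c dim), and the double series over (n, m)
  converges when c dim > 2: the points that are not badly approximable form a null set.
  For c = 2/dim, a badly approximable point cannot repeat a block of length 2j + O(1) among
  its first 2^(j+1) digits, since the repetition produces a periodic point that is too close.
  Doubling the length of a word without such repetitions multiplies their proportion by
  about exp(-const/j), and the product of these factors tends to 0: the badly approximable
  points form a null set.\<close>

section \<open>Codings\<close>

definition coding_shift :: "(nat \<Rightarrow> real) \<Rightarrow> nat \<Rightarrow> nat \<Rightarrow> real" where
  "coding_shift w k = (\<lambda>i. w (i + k))"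

definition prefix_value :: "(nat \<Rightarrow> real) \<Rightarrow> nat \<Rightarrow> real" where
  "prefix_value w k = (\<Sum>i<k. w i / 3 ^ (i + 1))"

lemma is_coding_coding_shift: "is_coding w \<Longrightarrow> is_coding (coding_shift w k)"
  by (auto simp: is_coding_def coding_shift_def)

lemma sums_2_div_power_3: "(\<lambda>i. 2 / 3 ^ (i + 1) :: real) sums 1"
proof -
  have "(\<lambda>i. (2/3) * (1/3::real) ^ i) sums ((2/3) * (1 / (1 - 1/3)))"
    by (intro sums_mult geometric_sums) simp
  moreover have "(\<lambda>i. (2/3) * (1/3::real) ^ i) = (\<lambda>i. 2 / 3 ^ (i + 1))"
    by (auto simp: power_divide field_simps)
  ultimately show ?thesis by simp
qed

lemma coding_term_bounds:
  "is_coding w \<Longrightarrow> 0 \<le> w i / 3 ^ (i + 1) \<and> w i / 3 ^ (i + 1) \<le> 2 / 3 ^ (i + 1)"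
  unfolding is_coding_def by (cases "w i = 0") (auto simp: divide_right_mono)

lemma summable_coding: "is_coding w \<Longrightarrow> summable (\<lambda>i. w i / 3 ^ (i + 1))"
proof (rule summable_comparison_test'[of "\<lambda>i. 2 / 3 ^ (i + 1)" 0])
  assume w: "is_coding w"
  show "summable (\<lambda>i. 2 / 3 ^ (i + 1) :: real)" using sums_2_div_power_3 by (simp add: sums_iff)
  fix n
  have "\<bar>w n\<bar> \<le> 2" using w unfolding is_coding_def by (cases "w n = 0") auto
  then show "norm (w n / 3 ^ (n + 1)) \<le> 2 / 3 ^ (n + 1)" by (simp add: divide_right_mono)
qed

lemma coding_point_nonneg: "is_coding w \<Longrightarrow> 0 \<le> coding_point w"
  unfolding coding_point_def using summable_coding coding_term_bounds by (simp add: suminf_nonneg)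

lemma coding_point_le_1: "is_coding w \<Longrightarrow> coding_point w \<le> 1"
proof -
  assume w: "is_coding w"
  have "coding_point w \<le> (\<Sum>i. 2 / 3 ^ (i + 1))"
    unfolding coding_point_def
    by (rule suminf_le) (use coding_term_bounds[OF w] summable_coding[OF w] sums_2_div_power_3
        in \<open>auto simp: sums_iff\<close>)
  then show ?thesis using sums_2_div_power_3 by (simp add: sums_iff)
qed

lemma coding_point_split:
  assumes w: "is_coding w"
  shows "coding_point w = prefix_value w k + coding_point (coding_shift w k) / 3 ^ k"
proof -
  have "coding_point w = (\<Sum>n. w (n + k) / 3 ^ (n + k + 1)) + prefix_value w k"
    unfolding coding_point_def prefix_value_def
    using suminf_split_initial_segment[OF summable_coding[OF w], of k] by simp
  also have "(\<lambda>n. w (n + k) / 3 ^ (n + k + 1)) = (\<lambda>n. (coding_shift w k n / 3 ^ (n + 1)) / 3 ^ k)"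
    by (auto simp: coding_shift_def power_add field_simps)
  also have "(\<Sum>n. (coding_shift w k n / 3 ^ (n + 1)) / 3 ^ k) = coding_point (coding_shift w k) / 3 ^ k"
    unfolding coding_point_def
    by (rule suminf_divide[OF summable_coding[OF is_coding_coding_shift[OF w]]])
  finally show ?thesis by simp
qed

lemma prefix_value_cong: "(\<And>i. i < k \<Longrightarrow> w i = v i) \<Longrightarrow> prefix_value w k = prefix_value v k"
  by (simp add: prefix_value_def)

lemma coding_point_shift_dist_le_1:
  assumes w: "is_coding w" and v: "is_coding v"
  shows "\<bar>coding_point (coding_shift w k) - coding_point (coding_shift v k)\<bar> \<le> 1"
proof -
  have "0 \<le> coding_point (coding_shift w k)" "coding_point (coding_shift w k) \<le> 1"
    "0 \<le> coding_point (coding_shift v k)" "coding_point (coding_shift v k) \<le> 1"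
    using coding_point_nonneg coding_point_le_1 is_coding_coding_shift w v by blast+
  then show ?thesis by linarith
qed

lemma coding_point_dist_le:
  assumes w: "is_coding w" and v: "is_coding v" and eq: "\<And>i. i < K \<Longrightarrow> w i = v i"
  shows "\<bar>coding_point w - coding_point v\<bar> \<le> 1 / 3 ^ K"
proof -
  define a where "a = coding_point (coding_shift w K)"
  define b where "b = coding_point (coding_shift v K)"
  have "coding_point w - coding_point v = (a - b) / 3 ^ K"
    using coding_point_split[OF w, of K] coding_point_split[OF v, of K] prefix_value_cong[OF eq]
    unfolding a_def b_def by (simp add: diff_divide_distrib)
  moreover have "\<bar>a - b\<bar> \<le> 1"
    unfolding a_def b_def by (rule coding_point_shift_dist_le_1[OF w v])
  ultimately show ?thesis by (simp add: divide_right_mono)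
qed

text \<open>Unlike the ternary expansion of arbitrary reals, codings by the digits 0 and 2 are
  separated: the first digit where two codings differ contributes a gap of 2 that the
  tails (at most 1 apart) cannot close.\<close>
lemma coding_eq_if_coding_point_close:
  assumes w: "is_coding w" and v: "is_coding v"
    and close: "\<bar>coding_point w - coding_point v\<bar> < 1 / 3 ^ K"
  shows "i < K \<Longrightarrow> w i = v i"
proof (induction i rule: less_induct)
  case (less i)
  show ?case
  proof (rule ccontr)
    assume ne: "w i \<noteq> v i"
    have "w i \<in> {0, 2}" "v i \<in> {0, 2}" using w v unfolding is_coding_def by auto
    then have d: "\<bar>w i - v i\<bar> = 2" using ne by auto
    define a where "a = coding_point (coding_shift w (Suc i))"
    define b where "b = coding_point (coding_shift v (Suc i))"
    have "prefix_value w i = prefix_value v i" using less by (intro prefix_value_cong) auto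
    then have e: "coding_point w - coding_point v = (w i - v i + (a - b)) / 3 ^ Suc i"
      using coding_point_split[OF w, of "Suc i"] coding_point_split[OF v, of "Suc i"]
      unfolding a_def b_def prefix_value_def by (simp add: field_simps)
    have "\<bar>a - b\<bar> \<le> 1"
      unfolding a_def b_def by (rule coding_point_shift_dist_le_1[OF w v])
    then have "1 \<le> \<bar>w i - v i + (a - b)\<bar>" using d by linarith
    then have "1 / 3 ^ Suc i \<le> \<bar>w i - v i + (a - b)\<bar> / 3 ^ Suc i"
      by (simp add: divide_right_mono)
    also have "\<dots> = \<bar>coding_point w - coding_point v\<bar>"
      unfolding e by simp
    finally have "1 / 3 ^ Suc i \<le> \<bar>coding_point w - coding_point v\<bar>" .
    moreover have "1 / 3 ^ K \<le> (1 / 3 ^ Suc i :: real)"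
      using less.prems by (intro divide_left_mono power_increasing) auto
    ultimately show False using close by linarith
  qed
qed

lemma coding_point_eq_imp_eq:
  assumes "is_coding w" "is_coding v" "coding_point w = coding_point v"
  shows "w = v"
proof
  fix i show "w i = v i"
    by (rule coding_eq_if_coding_point_close[OF assms(1,2), of "Suc i"]) (use assms(3) in auto)
qed

lemma coding_of_coding_point: "is_coding w \<Longrightarrow> coding_of (coding_point w) = w"
  unfolding coding_of_def by (rule the_equality) (auto dest: coding_point_eq_imp_eq)

lemma coding_of_cantor:
  "x \<in> cantor \<Longrightarrow> is_coding (coding_of x) \<and> coding_point (coding_of x) = x"
  unfolding cantor_def using coding_of_coding_point by auto

lemma coding_point_in_cantor: "is_coding w \<Longrightarrow> coding_point w \<in> cantor"
  unfolding cantor_def by auto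

section \<open>Eventually periodic codings\<close>

lemma periodic_from_add_mult: "periodic_from w n m \<Longrightarrow> n \<le> j \<Longrightarrow> w (j + k * m) = w j"
proof (induction k)
  case (Suc k)
  have "w (j + Suc k * m) = w ((j + k * m) + m)" by (simp add: algebra_simps)
  also have "\<dots> = w (j + k * m)" using Suc.prems unfolding periodic_from_def by auto
  finally show ?case using Suc by simp
qed simp

lemma periodic_from_mod:
  assumes "periodic_from w n m" and "n \<le> i"
  shows "w i = w (n + (i - n) mod m)"
proof -
  have "i = (n + (i - n) mod m) + ((i - n) div m) * m" using assms(2) by simp
  then show ?thesis by (metis periodic_from_add_mult[OF assms(1)] le_add1)
qed

lemma periodic_from_restart:
  assumes p: "periodic_from w n m" and p': "periodic_from w n' m'"
  shows "periodic_from w n' m"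
  unfolding periodic_from_def
proof (intro conjI allI impI)
  show "1 \<le> m" using p unfolding periodic_from_def by simp
  fix j assume j: "n' \<le> j"
  have "n \<le> j + n * m'" using p' unfolding periodic_from_def by (simp add: trans_le_add2)
  then have "w ((j + n * m') + m) = w (j + n * m')" using p unfolding periodic_from_def by blast
  then show "w (j + m) = w j"
    using periodic_from_add_mult[OF p' j, of n] periodic_from_add_mult[OF p', of "j + m" n] j
    by (simp add: algebra_simps)
qed

lemma preperiod_min_period:
  assumes p: "periodic_from w n m"
  shows "periodic_from w (preperiod w) (min_period w)" "preperiod w \<le> n" "min_period w \<le> m"
proof -
  have "\<exists>m. periodic_from w (preperiod w) m"
    unfolding preperiod_def by (rule LeastI_ex) (use p in blast)
  then obtain m0 where "periodic_from w (preperiod w) m0" ..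
  then have pm: "periodic_from w (preperiod w) m" by (rule periodic_from_restart[OF p])
  show "periodic_from w (preperiod w) (min_period w)"
    unfolding min_period_def by (rule LeastI[of "periodic_from w (preperiod w)", OF pm])
  show "min_period w \<le> m"
    unfolding min_period_def by (rule Least_le[of "periodic_from w (preperiod w)", OF pm])
  show "preperiod w \<le> n" unfolding preperiod_def by (rule Least_le) (use p in blast)
qed

definition period_denom :: "nat \<Rightarrow> nat \<Rightarrow> nat" where
  "period_denom n m = 3 ^ n * (3 ^ m - 1)"

lemma q_int_coding_point:
  "is_coding w \<Longrightarrow> q_int (coding_point w) = period_denom (preperiod w) (min_period w)"
  unfolding q_int_def period_denom_def by (simp add: coding_of_coding_point)

lemma period_denom_ge:
  assumes "1 \<le> m"
  shows "2 ^ (n + m) \<le> period_denom n m" "3 ^ (n + m - 1) \<le> period_denom n m"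
proof -
  have "(2::nat) ^ m + 1 \<le> 3 ^ m"
    using assms by (induction m rule: dec_induct) auto
  then have "(2::nat) ^ n * 2 ^ m \<le> 3 ^ n * (3 ^ m - 1)"
    by (intro mult_le_mono) (simp_all add: power_mono)
  then show "2 ^ (n + m) \<le> period_denom n m" unfolding period_denom_def by (simp add: power_add)
  obtain k where k: "m = Suc k" using assms by (cases m) auto
  have "(3::nat) ^ k \<le> 3 ^ m - 1" unfolding k by simp
  then show "3 ^ (n + m - 1) \<le> period_denom n m"
    unfolding period_denom_def using k by (simp add: power_add)
qed

lemma period_denom_ge_2: "1 \<le> m \<Longrightarrow> 2 \<le> period_denom n m"
  using period_denom_ge(1)[of m n] power_increasing[of 1 "n + m" "2::nat"] by simp

lemma q_int_le_3_power:
  assumes w: "is_coding w" and p: "periodic_from w n m"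
  shows "q_int (coding_point w) \<le> 3 ^ (n + m)"
proof -
  note pp = preperiod_min_period[OF p]
  have "q_int (coding_point w) \<le> 3 ^ preperiod w * 3 ^ min_period w"
    unfolding q_int_coding_point[OF w] period_denom_def by simp
  also have "\<dots> \<le> 3 ^ n * 3 ^ m" using pp by (intro mult_le_mono power_increasing) auto
  finally show ?thesis by (simp add: power_add)
qed

lemma power_3_mult_prefix_value_in_Ints: "is_coding w \<Longrightarrow> 3 ^ k * prefix_value w k \<in> \<int>"
proof -
  assume w: "is_coding w"
  have "3 ^ k * prefix_value w k = (\<Sum>i<k. w i * 3 ^ (k - Suc i))"
    unfolding prefix_value_def sum_distrib_left
  proof (rule sum.cong)
    fix i assume "i \<in> {..<k}"
    then have "(3::real) ^ k = 3 ^ (k - Suc i) * 3 ^ (i + 1)"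
      by (metis power_add Suc_eq_plus1 le_add_diff_inverse2 lessThan_iff Suc_leI)
    then show "3 ^ k * (w i / 3 ^ (i + 1)) = w i * 3 ^ (k - Suc i)" by simp
  qed simp
  also have "\<dots> \<in> \<int>"
  proof (rule Ints_sum)
    fix i
    have "w i \<in> \<int>" using w unfolding is_coding_def by (cases "w i = 0") auto
    then show "w i * 3 ^ (k - Suc i) \<in> \<int>" by simp
  qed
  finally show ?thesis .
qed

lemma power_3_mult_coding_point:
  "is_coding w \<Longrightarrow> 3 ^ k * coding_point w = 3 ^ k * prefix_value w k + coding_point (coding_shift w k)"
  using coding_point_split[of w k] by (simp add: distrib_left)

text \<open>Shifting by the period reproduces the tail, so the tails cancel in 3^(n+m) x - 3^n x.\<close>
lemma period_denom_mult_coding_point_in_Ints: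
  assumes w: "is_coding w" and p: "periodic_from w n m"
  shows "real (period_denom n m) * coding_point w \<in> \<int>"
proof -
  have "coding_shift w (n + m) = coding_shift w n"
    using p unfolding periodic_from_def coding_shift_def by (auto simp: add.assoc[symmetric])
  then have e: "(3 ^ (n + m) - 3 ^ n) * coding_point w
      = 3 ^ (n + m) * prefix_value w (n + m) - 3 ^ n * prefix_value w n"
    using power_3_mult_coding_point[OF w, of "n + m"] power_3_mult_coding_point[OF w, of n]
    by (simp add: left_diff_distrib)
  have "real (period_denom n m) = 3 ^ (n + m) - 3 ^ n"
    unfolding period_denom_def by (simp add: of_nat_diff power_add algebra_simps)
  then show ?thesis
    unfolding e using power_3_mult_prefix_value_in_Ints[OF w] by (simp add: e Ints_diff)
qed

lemma periodic_coding_point_rational: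
  assumes w: "is_coding w" and p: "periodic_from w n m"
  shows "coding_point w \<in> \<rat>"
proof -
  obtain z where z: "real (period_denom n m) * coding_point w = of_int z"
    using period_denom_mult_coding_point_in_Ints[OF w p] by (auto elim: Ints_cases)
  have "0 < period_denom n m"
    using period_denom_ge_2 p unfolding periodic_from_def by (metis less_le_trans zero_less_numeral)
  then have "coding_point w = of_int z / real (period_denom n m)" using z by (simp add: field_simps)
  then show ?thesis by simp
qed

lemma periodic_from_coding_shift_eq:
  assumes "c < d" and "coding_shift w c = coding_shift w d"
  shows "periodic_from w c (d - c)"
  unfolding periodic_from_def
proof (intro conjI allI impI)
  fix j assume "c \<le> j"
  then show "w (j + (d - c)) = w j"
    using fun_cong[OF assms(2), of "j - c"] assms(1) unfolding coding_shift_def by simp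
qed (use assms in simp)

text \<open>With x = a/b, b times the tail coding_point (coding_shift w k) = 3^k x - 3^k (prefix value)
  is an integer in [0, b], so two tails coincide.\<close>
lemma rational_coding_eventually_periodic:
  assumes x: "x \<in> cantor" and q: "x \<in> \<rat>"
  shows "\<exists>n m. periodic_from (coding_of x) n m"
proof -
  define w where "w = coding_of x"
  have w: "is_coding w" and xw: "coding_point w = x" using coding_of_cantor[OF x] unfolding w_def by auto
  obtain a b where ab: "x = of_int a / of_int b" and b: "b > 0"
    using q by (metis Rats_cases' of_int_of_nat_eq)
  define f where "f k = of_int b * coding_point (coding_shift w k)" for k
  have "f k \<in> of_int ` {0..b}" for k
  proof -
    have "3 ^ k * x = 3 ^ k * prefix_value w k + coding_point (coding_shift w k)"
      using power_3_mult_coding_point[OF w, of k] xw by simp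
    then have "f k = 3 ^ k * of_int a - of_int b * (3 ^ k * prefix_value w k)"
      unfolding f_def using ab b by (simp add: field_simps)
    also have "\<dots> \<in> \<int>"
      by (intro Ints_diff Ints_mult power_3_mult_prefix_value_in_Ints[OF w]) auto
    finally obtain z where z: "f k = of_int z" by (auto elim: Ints_cases)
    have "0 \<le> coding_point (coding_shift w k)" "coding_point (coding_shift w k) \<le> 1"
      using coding_point_nonneg coding_point_le_1 is_coding_coding_shift[OF w] by auto
    then have "0 \<le> f k" "f k \<le> of_int b" unfolding f_def using b by (simp_all add: mult_left_le)
    then have "0 \<le> z \<and> z \<le> b" using z by simp
    then show ?thesis unfolding z by (intro imageI) simp
  qed
  then have "range f \<subseteq> of_int ` {0..b}" by auto
  then have "finite (range f)" by (rule finite_subset) simp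
  then have "\<not> inj f" using finite_imageD infinite_UNIV_nat by blast
  then obtain c d where cd: "c < d" "f c = f d" by (metis inj_def linorder_neqE_nat)
  then have "coding_point (coding_shift w c) = coding_point (coding_shift w d)"
    unfolding f_def using b by simp
  then have "coding_shift w c = coding_shift w d"
    by (intro coding_point_eq_imp_eq is_coding_coding_shift w)
  then show ?thesis using periodic_from_coding_shift_eq[OF cd(1)] unfolding w_def by blast
qed

section \<open>Covers by cylinders\<close>

lemma cantor_dim_pos: "cantor_dim > 0"
  unfolding cantor_dim_def by simp

lemma power_3_powr_cantor_dim: "(3 ^ N :: real) powr cantor_dim = 2 ^ N"
proof -
  have "(3 ^ N :: real) powr cantor_dim = exp (real N * ln 2)"
    unfolding powr_def cantor_dim_def by (simp add: ln_realpow)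
  also have "\<dots> = 2 ^ N" by (simp add: exp_of_nat_mult)
  finally show ?thesis .
qed

lemma inverse_power_3_powr_cantor_dim: "(1 / 3 ^ N :: real) powr cantor_dim = 1 / 2 ^ N"
  by (simp add: powr_divide power_3_powr_cantor_dim)

definition words :: "nat \<Rightarrow> real list set" where
  "words N = {xs. set xs \<subseteq> {0, 2} \<and> length xs = N}"

lemma finite_words: "finite (words N)" and card_words: "card (words N) = 2 ^ N"
proof -
  show "finite (words N)" unfolding words_def by (rule finite_lists_length_eq) simp
  show "card (words N) = 2 ^ N" unfolding words_def using card_lists_length_eq[of "{0, 2::real}" N]
    by (simp add: numeral_2_eq_2)
qed

lemma take_words: "ys \<in> words N \<Longrightarrow> p \<le> N \<Longrightarrow> take p ys \<in> words p"
  unfolding words_def by (auto dest: in_set_takeD)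

definition word_value :: "real list \<Rightarrow> real" where
  "word_value xs = (\<Sum>i<length xs. xs ! i / 3 ^ (i + 1))"

lemma cantor_in_cylinder:
  assumes x: "x \<in> cantor"
  shows "x \<in> {word_value (map (coding_of x) [0..<N]) .. word_value (map (coding_of x) [0..<N]) + 1 / 3 ^ N}"
proof -
  define w where "w = coding_of x"
  have w: "is_coding w" and xw: "coding_point w = x" using coding_of_cantor[OF x] unfolding w_def by auto
  have "0 \<le> coding_point (coding_shift w N)" "coding_point (coding_shift w N) \<le> 1"
    using coding_point_nonneg coding_point_le_1 is_coding_coding_shift[OF w] by auto
  moreover have "word_value (map w [0..<N]) = prefix_value w N"
    unfolding word_value_def prefix_value_def by simp
  ultimately show ?thesis
    using coding_point_split[OF w, of N] xw unfolding w_def[symmetric] by (auto simp: divide_right_mono)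
qed

lemma sum_prod_decode_le_square:
  fixes h :: "nat \<times> nat \<Rightarrow> real"
  assumes "\<And>p. 0 \<le> h p"
  shows "(\<Sum>i<M. h (prod_decode i)) \<le> (\<Sum>k<M. \<Sum>t<M. h (k, t))"
proof -
  have "(\<Sum>i<M. h (prod_decode i)) = sum h (prod_decode ` {..<M})"
    by (simp add: sum.reindex inj_prod_decode)
  also have "\<dots> \<le> sum h ({..<M} \<times> {..<M})"
  proof (rule sum_mono2)
    show "prod_decode ` {..<M} \<subseteq> {..<M} \<times> {..<M}"
    proof
      fix p assume "p \<in> prod_decode ` {..<M}"
      then obtain i where i: "i < M" "p = prod_decode i" by auto
      obtain k t where p: "p = (k, t)" by fastforce
      have "prod_encode (k, t) < M" using i p by (metis prod_decode_inverse)
      then show "p \<in> {..<M} \<times> {..<M}"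
        unfolding p using le_prod_encode_1[of k t] le_prod_encode_2[of t k] by simp
    qed
  qed (use assms in auto)
  also have "\<dots> = (\<Sum>k<M. \<Sum>t<M. h (k, t))" by (simp add: sum.cartesian_product)
  finally show ?thesis .
qed

lemma hausdorff_pre_le_cover:
  fixes U :: "nat \<Rightarrow> real set"
  assumes cover: "E \<subseteq> (\<Union>i. U i)" and U: "\<And>i. bounded (U i) \<and> diameter (U i) \<le> \<rho>"
    and sums: "\<And>M. (\<Sum>i<M. diameter (U i) powr s) \<le> \<eta>"
  shows "hausdorff_pre s \<rho> E \<le> ennreal \<eta>"
proof -
  have "hausdorff_pre s \<rho> E \<le> (\<Sum>i. ennreal (diameter (U i) powr s))"
    unfolding hausdorff_pre_def by (intro INF_lower) (use cover U in auto)
  moreover have summable: "summable (\<lambda>i. diameter (U i) powr s)"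
  proof (rule bounded_imp_summable[of _ \<eta>])
    show "(\<Sum>k\<le>n. diameter (U k) powr s) \<le> \<eta>" for n
      using sums[of "Suc n"] by (simp only: lessThan_Suc_atMost)
  qed simp
  then have "(\<Sum>i. ennreal (diameter (U i) powr s)) = ennreal (\<Sum>i. diameter (U i) powr s)"
    by (intro suminf_ennreal2) auto
  moreover have "(\<Sum>i. diameter (U i) powr s) \<le> \<eta>" by (rule suminf_le_const[OF summable sums])
  ultimately show ?thesis by (metis ennreal_leI order_trans)
qed

text \<open>A word of length K determines a cylinder interval of length 3^-K, whose diameter to
  the power dim is 2^-K.\<close>
lemma hausdorff_pre_le_cylinder_cover:
  fixes S :: "nat \<Rightarrow> real list set" and lev :: "nat \<Rightarrow> nat"
  assumes fin: "\<And>k. finite (S k)"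
    and small: "\<And>k. 1 / 3 ^ lev k \<le> \<rho>"
    and cover: "\<And>x. x \<in> E \<Longrightarrow> \<exists>k. map (coding_of x) [0..<lev k] \<in> S k"
    and E: "E \<subseteq> cantor"
    and sums: "\<And>M. (\<Sum>k<M. real (card (S k)) / 2 ^ lev k) \<le> \<eta>"
  shows "hausdorff_pre cantor_dim \<rho> E \<le> ennreal \<eta>"
proof -
  obtain enum where enum: "\<And>k. set (enum k) = S k \<and> distinct (enum k)"
    using finite_distinct_list[OF fin] by metis
  then have len: "length (enum k) = card (S k)" for k by (metis distinct_card)
  define I where "I k t = {word_value (enum k ! t) .. word_value (enum k ! t) + 1 / 3 ^ lev k}" for k t
  define U where "U i = (case prod_decode i of (k, t) \<Rightarrow> if t < card (S k) then I k t else {})" for i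
  define h where "h p = (case p of (k, t) \<Rightarrow> if t < card (S k) then 1 / 2 ^ lev k else (0::real))" for p
  have h_nonneg: "0 \<le> h p" for p unfolding h_def by (auto split: prod.splits)
  show ?thesis
  proof (rule hausdorff_pre_le_cover)
    show "bounded (U i) \<and> diameter (U i) \<le> \<rho>" for i
      using small order_trans[OF _ small] unfolding U_def I_def by (auto split: prod.splits)
    show "E \<subseteq> (\<Union>i. U i)"
    proof
      fix x assume x: "x \<in> E"
      obtain k where "map (coding_of x) [0..<lev k] \<in> S k" using cover[OF x] by blast
      then obtain t where t: "t < card (S k)" "enum k ! t = map (coding_of x) [0..<lev k]"
        using enum[of k] len[of k] by (metis in_set_conv_nth)
      then have "x \<in> U (prod_encode (k, t))"
        unfolding U_def I_def using cantor_in_cylinder E x by auto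
      then show "x \<in> (\<Union>i. U i)" by blast
    qed
    show "(\<Sum>i<M. diameter (U i) powr cantor_dim) \<le> \<eta>" for M
    proof -
      have "diameter (U i) powr cantor_dim = h (prod_decode i)" for i
        using inverse_power_3_powr_cantor_dim unfolding U_def h_def I_def by (auto split: prod.splits)
      then have "(\<Sum>i<M. diameter (U i) powr cantor_dim) \<le> (\<Sum>k<M. \<Sum>t<M. h (k, t))"
        using sum_prod_decode_le_square[OF h_nonneg] by simp
      also have "\<dots> \<le> (\<Sum>k<M. real (card (S k)) / 2 ^ lev k)"
      proof (rule sum_mono)
        fix k
        have "(\<Sum>t<M. h (k, t)) = (\<Sum>t\<in>{..<M} \<inter> {..<card (S k)}. 1 / 2 ^ lev k)"
          unfolding h_def by (subst sum.inter_restrict) (auto simp: lessThan_def)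
        also have "\<dots> \<le> (\<Sum>t<card (S k). 1 / 2 ^ lev k)" by (rule sum_mono2) auto
        finally show "(\<Sum>t<M. h (k, t)) \<le> real (card (S k)) / 2 ^ lev k" by simp
      qed
      also have "\<dots> \<le> \<eta>" by (rule sums)
      finally show ?thesis .
    qed
  qed
qed

lemma hausdorff_pre_antimono: "\<rho> \<le> \<rho>' \<Longrightarrow> hausdorff_pre s \<rho>' A \<le> hausdorff_pre s \<rho> A"
  unfolding hausdorff_pre_def by (rule INF_superset_mono) (auto intro: order_trans)

lemma hausdorff_eq_0I:
  assumes "\<And>N e. e > 0 \<Longrightarrow> hausdorff_pre cantor_dim (1 / 3 ^ N) E \<le> ennreal e"
  shows "hausdorff cantor_dim E = 0"
proof -
  have "hausdorff_pre cantor_dim r E = 0" if r: "r > 0" for r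
  proof -
    obtain N where "(1/3::real) ^ N < r" using real_arch_pow_inv[OF r, of "1/3"] by auto
    then have "hausdorff_pre cantor_dim r E \<le> hausdorff_pre cantor_dim (1 / 3 ^ N) E"
      by (intro hausdorff_pre_antimono) (simp add: power_divide)
    then have "hausdorff_pre cantor_dim r E \<le> 0 + ennreal e" if "e > 0" for e
      using assms[OF that, of N] by simp
    then show ?thesis by (metis ennreal_le_epsilon le_zero_eq)
  qed
  then show ?thesis unfolding hausdorff_def by simp
qed

lemma mu_ae_if_hausdorff_null:
  "hausdorff cantor_dim {x \<in> cantor. \<not> P x} = 0 \<Longrightarrow> mu_ae P"
  unfolding mu_ae_def cantor_mu_def by (simp add: Int_absorb2)

section \<open>Approximation by periodic points\<close>

definition triadic_level :: "real \<Rightarrow> nat" where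
  "triadic_level r = (LEAST K. 1 / 3 ^ (K + 1) < r)"

lemma triadic_level:
  assumes "0 < r" "r \<le> 1"
  shows "r \<le> 1 / 3 ^ triadic_level r" "1 / 3 ^ (triadic_level r + 1) < r"
proof -
  obtain n where n: "(1/3::real) ^ n < r" using real_arch_pow_inv[OF assms(1), of "1/3"] by auto
  have "1 / 3 ^ (n + 1) \<le> (1/3::real) ^ n" by (auto simp: power_one_over intro!: divide_left_mono)
  then have ex: "\<exists>K. 1 / 3 ^ (K + 1) < r" using n by (metis le_less_trans)
  show "1 / 3 ^ (triadic_level r + 1) < r" unfolding triadic_level_def by (rule LeastI_ex[OF ex])
  show "r \<le> 1 / 3 ^ triadic_level r"
  proof (cases "triadic_level r")
    case (Suc K)
    then have "\<not> 1 / 3 ^ (K + 1) < r" unfolding triadic_level_def by (metis lessI not_less_Least)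
    then show ?thesis using Suc by simp
  qed (use assms in simp)
qed

lemma le_triadic_level:
  assumes "0 < r" "r \<le> 1 / 3 ^ N"
  shows "N \<le> triadic_level r"
proof (rule ccontr)
  assume "\<not> N \<le> triadic_level r"
  then have "(3::real) ^ (triadic_level r + 1) \<le> 3 ^ N" by (intro power_increasing) auto
  then have "1 / 3 ^ N \<le> (1 / 3 ^ (triadic_level r + 1) :: real)" by (intro divide_left_mono) auto
  moreover have "r \<le> 1" using assms(2) order_trans[of r "1 / 3 ^ N" 1] by simp
  ultimately show False using triadic_level(2)[OF assms(1)] assms(2) by linarith
qed

definition periodic_prefixes :: "nat \<Rightarrow> nat \<Rightarrow> nat \<Rightarrow> real list set" where
  "periodic_prefixes n m K = {map \<rho> [0..<K] | \<rho>. is_coding \<rho> \<and> periodic_from \<rho> n m}"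

text \<open>A coding periodic from n with period m is determined by its first n + m digits.\<close>
lemma periodic_prefixes:
  assumes m: "1 \<le> m"
  shows "finite (periodic_prefixes n m K)" "card (periodic_prefixes n m K) \<le> 2 ^ (n + m)"
proof -
  define idx where "idx i = (if i < n + m then i else n + (i - n) mod m)" for i
  define F where "F xs = map (\<lambda>i. xs ! idx i) [0..<K]" for xs :: "real list"
  have "periodic_prefixes n m K \<subseteq> F ` words (n + m)"
  proof
    fix a assume "a \<in> periodic_prefixes n m K"
    then obtain \<rho> where a: "a = map \<rho> [0..<K]" and \<rho>: "is_coding \<rho>" "periodic_from \<rho> n m"
      unfolding periodic_prefixes_def by auto
    have "map \<rho> [0..<n + m] ! idx i = \<rho> i" for i
    proof -
      have "idx i < n + m" unfolding idx_def using m by auto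
      then have "map \<rho> [0..<n + m] ! idx i = \<rho> (idx i)" by simp
      also have "\<dots> = \<rho> i" unfolding idx_def using periodic_from_mod[OF \<rho>(2), of i] by auto
      finally show ?thesis .
    qed
    then have "F (map \<rho> [0..<n + m]) = a" unfolding a F_def by simp
    moreover have "map \<rho> [0..<n + m] \<in> words (n + m)"
      using \<rho>(1) unfolding words_def is_coding_def by auto
    ultimately show "a \<in> F ` words (n + m)" by blast
  qed
  then show "finite (periodic_prefixes n m K)" "card (periodic_prefixes n m K) \<le> 2 ^ (n + m)"
    using finite_words card_words card_image_le[OF finite_words, of F "n + m"]
    by (auto intro: finite_subset dest: card_mono[rotated])
qed

lemma irrational_dist_fractions_ge:
  assumes x: "x \<notin> \<rat>" and D: "0 < D"
  shows "\<exists>g>0. \<forall>z::int. g \<le> \<bar>x - of_int z / real D\<bar>"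
proof -
  define y where "y = real D * x"
  define fr where "fr = y - of_int \<lfloor>y\<rfloor>"
  have "fr \<noteq> 0"
  proof
    assume "fr = 0"
    then have "x = of_int \<lfloor>y\<rfloor> / real D" unfolding fr_def y_def using D by (simp add: field_simps)
    then show False using x by simp
  qed
  moreover have "0 \<le> fr" "fr < 1" unfolding fr_def by linarith+
  ultimately have g0: "min fr (1 - fr) > 0" by simp
  have "min fr (1 - fr) / real D \<le> \<bar>x - of_int z / real D\<bar>" for z :: int
  proof -
    have "min fr (1 - fr) \<le> \<bar>y - of_int z\<bar>"
      unfolding fr_def by (cases "z \<le> \<lfloor>y\<rfloor>") linarith+
    moreover have "\<bar>x - of_int z / real D\<bar> = \<bar>y - of_int z\<bar> / real D"
      unfolding y_def using D by (simp add: field_simps)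
    ultimately show ?thesis using D by (simp add: divide_right_mono)
  qed
  then show ?thesis using g0 D by (intro exI[of _ "min fr (1 - fr) / real D"]) auto
qed

definition approx_radius :: "(real \<Rightarrow> real) \<Rightarrow> nat \<Rightarrow> nat \<Rightarrow> real" where
  "approx_radius \<psi> n m = \<psi> (real (period_denom n m)) / real (period_denom n m)"

lemma approx_radius_pos:
  assumes "1 \<le> m" and "\<And>q. 2 \<le> q \<Longrightarrow> 0 < \<psi> q"
  shows "0 < approx_radius \<psi> n m"
  using period_denom_ge_2[OF assms(1), of n] assms(2) unfolding approx_radius_def by simp

lemma approx_radius_le:
  assumes m: "1 \<le> m" and \<psi>_le: "\<And>q. 2 \<le> q \<Longrightarrow> \<psi> q \<le> B" and B: "0 \<le> B"
  shows "approx_radius \<psi> n m \<le> B / 3 ^ (n + m - 1)"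
proof -
  define q where "q = real (period_denom n m)"
  have q: "2 \<le> q" "3 ^ (n + m - 1) \<le> q"
    unfolding q_def using period_denom_ge_2[OF m, of n] period_denom_ge(2)[OF m, of n] by simp_all
  then have "\<psi> q / q \<le> B / q" using \<psi>_le by (intro divide_right_mono) auto
  also have "\<dots> \<le> B / 3 ^ (n + m - 1)" using q B by (intro divide_left_mono) auto
  finally show ?thesis unfolding approx_radius_def q_def .
qed

lemma approx_radius_le_inverse_power_3:
  assumes m: "1 \<le> m" and \<psi>_le: "\<And>q. 2 \<le> q \<Longrightarrow> \<psi> q \<le> B" and B: "0 \<le> B"
    and k: "B * 3 ^ N < 3 ^ k" "k < n + m"
  shows "approx_radius \<psi> n m \<le> 1 / 3 ^ N"
proof -
  have "approx_radius \<psi> n m \<le> B / 3 ^ (n + m - 1)" by (rule approx_radius_le[OF m \<psi>_le B])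
  also have "\<dots> \<le> B / 3 ^ k" using k B by (intro divide_left_mono power_increasing) auto
  also have "\<dots> < 1 / 3 ^ N" using k by (simp add: field_simps)
  finally show ?thesis by simp
qed

lemma periodic_coding_point_fraction:
  assumes \<rho>: "is_coding \<rho>" "periodic_from \<rho> n m" and k: "n + m \<le> k"
  shows "\<exists>z::int. coding_point \<rho> = of_int z / real (fact (3 ^ k) :: nat)"
proof -
  have m: "1 \<le> m" using \<rho>(2) unfolding periodic_from_def by simp
  have "(3::nat) ^ (n + m) \<le> 3 ^ k" using k by (intro power_increasing) auto
  moreover have "period_denom n m \<le> 3 ^ (n + m)" unfolding period_denom_def by (simp add: power_add)
  ultimately have "period_denom n m \<le> 3 ^ k" by linarith
  then have "period_denom n m dvd fact (3 ^ k)"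
    using period_denom_ge_2[OF m, of n] by (intro dvd_fact) auto
  then obtain j where j: "fact (3 ^ k) = period_denom n m * j" by blast
  obtain z where "real (period_denom n m) * coding_point \<rho> = of_int z"
    using period_denom_mult_coding_point_in_Ints[OF \<rho>] by (auto elim: Ints_cases)
  then have "real (fact (3 ^ k) :: nat) * coding_point \<rho> = of_int (int j * z)"
    unfolding j by (simp add: algebra_simps)
  then show ?thesis by (intro exI[of _ "int j * z"]) (simp add: field_simps)
qed

text \<open>An irrational point keeps a positive distance from the finitely many rationals of
  denominator dividing (3^(2s))!, which include all periodic points of preperiod and period
  below s; so the approximations showing that x is not badly approximable can be taken with
  preperiod or period at least s.\<close>
lemma irrational_not_badly_approx_close_to_periodic:
  fixes \<psi> :: "real \<Rightarrow> real"
  assumes x: "x \<in> cantor" "x \<notin> \<rat>" and not_bad: "\<not> badly_symb_approx \<psi> x"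
    and \<psi>_pos: "\<And>q. 2 \<le> q \<Longrightarrow> 0 < \<psi> q" and \<psi>_le: "\<And>q. 2 \<le> q \<Longrightarrow> \<psi> q \<le> B"
  shows "\<exists>n m \<rho>. 1 \<le> m \<and> (s \<le> n \<or> s \<le> m) \<and> is_coding \<rho> \<and> periodic_from \<rho> n m \<and>
           \<bar>x - coding_point \<rho>\<bar> < approx_radius \<psi> n m"
proof -
  define D :: nat where "D = fact (3 ^ (2 * s))"
  obtain g where g0: "0 < g" and g: "\<And>z::int. g \<le> \<bar>x - of_int z / real D\<bar>"
    using irrational_dist_fractions_ge[OF x(2), of D] unfolding D_def by auto
  have B: "0 < B" using \<psi>_pos[of 2] \<psi>_le[of 2] by simp
  obtain r where r: "r \<in> \<rat> \<inter> cantor"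
    and close: "\<bar>x - r\<bar> < min 1 (g / B) * \<psi> (real (q_int r)) / real (q_int r)"
    using not_bad g0 B unfolding badly_symb_approx_def by (meson not_le min_less_iff_conj zero_less_one divide_pos_pos)
  define \<rho> where "\<rho> = coding_of r"
  have \<rho>: "is_coding \<rho>" "coding_point \<rho> = r" using coding_of_cantor[of r] r unfolding \<rho>_def by auto
  obtain n0 m0 where "periodic_from \<rho> n0 m0"
    using rational_coding_eventually_periodic[of r] r unfolding \<rho>_def by blast
  then have p: "periodic_from \<rho> (preperiod \<rho>) (min_period \<rho>)" by (rule preperiod_min_period)
  define n where "n = preperiod \<rho>"
  define m where "m = min_period \<rho>"
  have m: "1 \<le> m" using p unfolding m_def periodic_from_def by simp
  define R where "R = approx_radius \<psi> n m"
  have close': "\<bar>x - coding_point \<rho>\<bar> < min 1 (g / B) * R"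
    using close q_int_coding_point[OF \<rho>(1)] \<rho>(2) unfolding R_def approx_radius_def n_def m_def by simp
  have "B / 3 ^ (n + m - 1) \<le> B / 1" using B by (intro divide_left_mono) auto
  then have R: "0 < R" "R \<le> B"
    using approx_radius_pos[where \<psi> = \<psi> and n = n, OF m \<psi>_pos]
      approx_radius_le[where \<psi> = \<psi> and n = n, OF m \<psi>_le] B
    unfolding R_def by auto
  have "s \<le> n \<or> s \<le> m"
  proof (rule ccontr)
    assume "\<not> (s \<le> n \<or> s \<le> m)"
    then obtain z where "coding_point \<rho> = of_int z / real D"
      using periodic_coding_point_fraction[OF \<rho>(1) p, of "2 * s"] unfolding D_def n_def m_def by auto
    then have "g \<le> \<bar>x - coding_point \<rho>\<bar>" using g by simp
    moreover have "min 1 (g / B) * R \<le> (g / B) * B" using R g0 B by (intro mult_mono) auto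
    ultimately show False using close' B by simp
  qed
  moreover have "min 1 (g / B) * R \<le> R" using R g0 B by (intro mult_left_le_one_le) auto
  ultimately show ?thesis using close' m \<rho>(1) p unfolding R_def n_def m_def by force
qed

lemma not_badly_approx_close_to_periodic:
  fixes \<psi> :: "real \<Rightarrow> real"
  assumes x: "x \<in> cantor" and not_bad: "\<not> badly_symb_approx \<psi> x"
    and \<psi>_pos: "\<And>q. 2 \<le> q \<Longrightarrow> 0 < \<psi> q" and \<psi>_le: "\<And>q. 2 \<le> q \<Longrightarrow> \<psi> q \<le> B"
  shows "\<exists>n m \<rho>. 1 \<le> m \<and> (s \<le> n \<or> s \<le> m) \<and> is_coding \<rho> \<and> periodic_from \<rho> n m \<and>
           \<bar>x - coding_point \<rho>\<bar> < approx_radius \<psi> n m"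
proof (cases "x \<in> \<rat>")
  case True
  obtain n m where "periodic_from (coding_of x) n m"
    using rational_coding_eventually_periodic[OF x True] by blast
  then have "1 \<le> m" "periodic_from (coding_of x) (n + s) m" unfolding periodic_from_def by auto
  then show ?thesis
    using coding_of_cantor[OF x] approx_radius_pos[where \<psi> = \<psi>, OF _ \<psi>_pos] by (intro exI conjI) auto
next
  case False
  then show ?thesis by (rule irrational_not_badly_approx_close_to_periodic[OF x _ not_bad \<psi>_pos \<psi>_le])
qed

lemma not_badly_approx_in_periodic_cylinder:
  fixes \<psi> :: "real \<Rightarrow> real"
  assumes x: "x \<in> cantor" and not_bad: "\<not> badly_symb_approx \<psi> x"
    and \<psi>_pos: "\<And>q. 2 \<le> q \<Longrightarrow> 0 < \<psi> q" and \<psi>_le: "\<And>q. 2 \<le> q \<Longrightarrow> \<psi> q \<le> B"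
    and small: "\<And>n m. 1 \<le> m \<Longrightarrow> s \<le> n \<or> s \<le> m \<Longrightarrow> approx_radius \<psi> n m \<le> 1"
  shows "\<exists>n m. 1 \<le> m \<and> (s \<le> n \<or> s \<le> m) \<and>
    map (coding_of x) [0..<triadic_level (approx_radius \<psi> n m)]
      \<in> periodic_prefixes n m (triadic_level (approx_radius \<psi> n m))"
proof -
  obtain n m \<rho> where nm: "1 \<le> m" "s \<le> n \<or> s \<le> m" and \<rho>: "is_coding \<rho>" "periodic_from \<rho> n m"
    and close: "\<bar>x - coding_point \<rho>\<bar> < approx_radius \<psi> n m"
    using not_badly_approx_close_to_periodic[OF x not_bad \<psi>_pos \<psi>_le] by blast
  define K where "K = triadic_level (approx_radius \<psi> n m)"
  have "approx_radius \<psi> n m \<le> 1 / 3 ^ K"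
    unfolding K_def by (rule triadic_level(1)[OF approx_radius_pos[where \<psi> = \<psi>, OF nm(1) \<psi>_pos] small[OF nm]])
  then have "\<bar>coding_point (coding_of x) - coding_point \<rho>\<bar> < 1 / 3 ^ K"
    using close coding_of_cantor[OF x] by simp
  then have "map (coding_of x) [0..<K] = map \<rho> [0..<K]"
    using coding_eq_if_coding_point_close[OF _ \<rho>(1)] coding_of_cantor[OF x] by simp
  then have "map (coding_of x) [0..<K] \<in> periodic_prefixes n m K"
    unfolding periodic_prefixes_def using \<rho> by auto
  then show ?thesis using nm unfolding K_def by blast
qed

text \<open>Stage k = prod_encode (n, m - 1) of the cover consists of the cylinders of the
  periodic codings of preperiod n and period m, at the level of the approximation radius.\<close>
lemma hausdorff_pre_not_badly_approx_le:
  fixes \<psi> :: "real \<Rightarrow> real"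
  assumes \<psi>_pos: "\<And>q. 2 \<le> q \<Longrightarrow> 0 < \<psi> q" and \<psi>_le: "\<And>q. 2 \<le> q \<Longrightarrow> \<psi> q \<le> B"
    and fine: "\<And>n m. 1 \<le> m \<Longrightarrow> s \<le> n \<or> s \<le> m \<Longrightarrow> approx_radius \<psi> n m \<le> 1 / 3 ^ N"
    and sums: "\<And>M. (\<Sum>k<M. case prod_decode k of (n, m) \<Rightarrow>
        if s \<le> n \<or> s \<le> Suc m
        then 2 ^ (n + Suc m) / 2 ^ triadic_level (approx_radius \<psi> n (Suc m)) else 0) \<le> \<eta>"
  shows "hausdorff_pre cantor_dim (1 / 3 ^ N) {x \<in> cantor. \<not> badly_symb_approx \<psi> x} \<le> ennreal \<eta>"
proof -
  define lev where "lev k = (case prod_decode k of (n, m) \<Rightarrow>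
      if s \<le> n \<or> s \<le> Suc m then triadic_level (approx_radius \<psi> n (Suc m)) else N)" for k
  define S where "S k = (case prod_decode k of (n, m) \<Rightarrow>
      if s \<le> n \<or> s \<le> Suc m then periodic_prefixes n (Suc m) (lev k) else {})" for k
  have small: "approx_radius \<psi> n m \<le> 1" if "1 \<le> m" "s \<le> n \<or> s \<le> m" for n m
    using fine[OF that] order_trans[of _ "1 / 3 ^ N :: real" 1] by simp
  show ?thesis
  proof (rule hausdorff_pre_le_cylinder_cover[of S lev])
    show "finite (S k)" for k
      unfolding S_def using periodic_prefixes(1) by (simp split: prod.splits)
    show "1 / 3 ^ lev k \<le> (1 / 3 ^ N :: real)" for k
    proof -
      have "N \<le> lev k"
        unfolding lev_def using le_triadic_level approx_radius_pos[where \<psi> = \<psi>, OF _ \<psi>_pos] fine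
        by (auto split: prod.splits)
      then show ?thesis by (intro divide_left_mono power_increasing) auto
    qed
    show "\<exists>k. map (coding_of x) [0..<lev k] \<in> S k"
      if "x \<in> {x \<in> cantor. \<not> badly_symb_approx \<psi> x}" for x
    proof -
      have x: "x \<in> cantor" "\<not> badly_symb_approx \<psi> x" using that by auto
      obtain n m where m: "1 \<le> m" "s \<le> n \<or> s \<le> m" and in_S: "map (coding_of x)
          [0..<triadic_level (approx_radius \<psi> n m)] \<in> periodic_prefixes n m (triadic_level (approx_radius \<psi> n m))"
        using not_badly_approx_in_periodic_cylinder[OF x \<psi>_pos \<psi>_le small] by blast
      obtain m' where m': "m = Suc m'" using m by (cases m) auto
      have "prod_decode (prod_encode (n, m')) = (n, m')" by simp
      then show ?thesis
        using in_S m unfolding S_def lev_def m' by (intro exI[of _ "prod_encode (n, m')"]) auto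
    qed
    show "(\<Sum>k<M. real (card (S k)) / 2 ^ lev k) \<le> \<eta>" for M
    proof (rule order_trans[OF sum_mono sums])
      fix k
      obtain n m where k: "prod_decode k = (n, m)" by fastforce
      have "real (card (periodic_prefixes n (Suc m) K)) \<le> real ((2::nat) ^ (n + Suc m))" for K
        by (simp only: of_nat_le_iff) (rule periodic_prefixes(2), simp)
      then show "real (card (S k)) / 2 ^ lev k \<le> (case prod_decode k of (n, m) \<Rightarrow>
          if s \<le> n \<or> s \<le> Suc m
          then 2 ^ (n + Suc m) / 2 ^ triadic_level (approx_radius \<psi> n (Suc m)) else 0)"
        unfolding S_def lev_def k by (simp add: divide_right_mono)
    qed
  qed blast
qed

lemma double_series_tail_small:
  fixes a :: "nat \<Rightarrow> real"
  assumes a: "summable a" and a_nonneg: "\<And>i. 0 \<le> a i" and r: "0 < r"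
  shows "\<exists>t. \<forall>M. (\<Sum>k<M. case prod_decode k of (n, m) \<Rightarrow>
            if t \<le> n \<or> t \<le> m then a n * a m else 0) \<le> r"
proof -
  define A where "A = suminf a"
  have A: "0 \<le> A" unfolding A_def by (rule suminf_nonneg[OF a a_nonneg])
  obtain t where t: "\<forall>n\<ge>t. norm (\<Sum>i. a (i + n)) < r / (2 * A + 1)"
    using suminf_exist_split[OF _ a, of "r / (2 * A + 1)"] r A by auto
  define X where "X n = (if t \<le> n then a n else 0)" for n
  have X_nonneg: "0 \<le> X n" for n unfolding X_def using a_nonneg by simp
  have X_sum: "(\<Sum>n<M. X n) \<le> r / (2 * A + 1)" for M
  proof -
    have "(\<Sum>n<M. X n) = (\<Sum>i<M - t. a (i + t))"
      unfolding X_def by (simp add: sum.If_cases, rule sum.reindex_bij_witness[of _ "\<lambda>i. i + t" "\<lambda>n. n - t"]) auto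
    also have "\<dots> \<le> (\<Sum>i. a (i + t))"
      by (rule sum_le_suminf) (use a a_nonneg summable_iff_shift[of a t] in auto)
    finally show ?thesis using t by auto
  qed
  define G where "G = (\<lambda>(n, m). if t \<le> n \<or> t \<le> m then a n * a m else 0)"
  have "(\<Sum>k<M. G (prod_decode k)) \<le> r" for M
  proof -
    have "(\<Sum>k<M. G (prod_decode k)) \<le> (\<Sum>n<M. \<Sum>m<M. G (n, m))"
      by (rule sum_prod_decode_le_square) (use a_nonneg in \<open>auto simp: G_def\<close>)
    also have "\<dots> \<le> (\<Sum>n<M. \<Sum>m<M. X n * a m + a n * X m)"
      unfolding X_def G_def using a_nonneg by (intro sum_mono) auto
    also have "\<dots> = (\<Sum>n<M. X n) * (\<Sum>m<M. a m) + (\<Sum>n<M. a n) * (\<Sum>m<M. X m)"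
      by (simp only: sum.distrib sum_product)
    also have "\<dots> = 2 * ((\<Sum>n<M. X n) * (\<Sum>m<M. a m))" by simp
    also have "\<dots> \<le> 2 * (r / (2 * A + 1) * A)"
      using X_sum sum_le_suminf[OF a, of "{..<M}"] X_nonneg a_nonneg A r
      by (intro mult_left_mono mult_mono sum_nonneg) (auto simp: A_def)
    also have "\<dots> \<le> r" using A r by (simp add: field_simps)
    finally show ?thesis .
  qed
  then show ?thesis unfolding G_def by blast
qed

lemma ln_period_denom_powr_le:
  assumes m: "1 \<le> m" and p: "0 < p"
  shows "ln (real (period_denom n m)) powr - p
    \<le> ln 2 powr - p * (real n + 1) powr (- p / 2) * real m powr (- p / 2)"
proof -
  define Q where "Q = real (period_denom n m)"
  have Q: "2 ^ (n + m) \<le> Q" "0 < Q"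
    unfolding Q_def using period_denom_ge(1)[OF m, of n] period_denom_ge_2[OF m, of n] by simp_all
  have "ln Q powr - p \<le> (real (n + m) * ln 2) powr - p"
  proof (rule powr_mono2')
    have "ln (2 ^ (n + m) :: real) \<le> ln Q" using Q by (subst ln_le_cancel_iff) auto
    then show "real (n + m) * ln 2 \<le> ln Q" by (simp add: ln_realpow)
  qed (use p m in auto)
  also have "\<dots> = (real (n + m) powr 2) powr (- p / 2) * ln 2 powr - p"
    by (subst powr_powr) (simp add: powr_mult)
  also have "\<dots> \<le> ((real n + 1) * real m) powr (- p / 2) * ln 2 powr - p"
  proof (intro mult_right_mono powr_mono2')
    have "(real n + 1) * real m \<le> real n * real m + real m * real m"
      using m by (simp add: algebra_simps)
    also have "\<dots> \<le> (real n + real m) ^ 2" by (simp add: power2_eq_square algebra_simps)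
    finally show "(real n + 1) * real m \<le> real (n + m) powr 2" by simp
  qed (use p m in auto)
  also have "\<dots> = ln 2 powr - p * (real n + 1) powr (- p / 2) * real m powr (- p / 2)"
    by (simp add: powr_mult)
  finally show ?thesis unfolding Q_def .
qed

text \<open>With Q = 3^n (3^m - 1), the level K of the radius satisfies 2^-K \<approx> Q^-dim (log Q)^(-c dim),
  and Q^dim \<ge> 2^(n+m-1); the rest is log Q \<ge> (n + m) log 2 and (n + m)^2 \<ge> (n + 1) m.\<close>
lemma ln_powr_cylinder_ratio_le:
  fixes c :: real
  assumes m: "1 \<le> m" and c: "0 < c" and R: "approx_radius (\<lambda>q. ln q powr - c) n m \<le> 1"
  shows "2 ^ (n + m) / 2 ^ triadic_level (approx_radius (\<lambda>q. ln q powr - c) n m)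
    \<le> 4 * ln 2 powr - (c * cantor_dim) * (real n + 1) powr (- (c * cantor_dim) / 2)
        * real m powr (- (c * cantor_dim) / 2)"
proof -
  define Q where "Q = real (period_denom n m)"
  define K where "K = triadic_level (approx_radius (\<lambda>q. ln q powr - c) n m)"
  have Q: "3 ^ (n + m - 1) \<le> Q" "0 < Q"
    unfolding Q_def using period_denom_ge(2)[OF m, of n] period_denom_ge_2[OF m, of n] by simp_all
  have "0 < approx_radius (\<lambda>q. ln q powr - c) n m" by (rule approx_radius_pos[OF m]) simp
  then have "1 / 3 ^ (K + 1) < ln Q powr - c / Q"
    using triadic_level(2)[OF _ R] unfolding K_def Q_def approx_radius_def by simp
  then have "(1 / 3 ^ (K + 1) :: real) powr cantor_dim \<le> (ln Q powr - c / Q) powr cantor_dim"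
    using cantor_dim_pos by (intro powr_mono2) auto
  then have "1 / 2 ^ (K + 1) \<le> (ln Q powr - c / Q) powr cantor_dim"
    by (simp only: inverse_power_3_powr_cantor_dim)
  also have "\<dots> = ln Q powr - (c * cantor_dim) / Q powr cantor_dim"
    by (simp add: powr_divide powr_powr)
  also have "\<dots> \<le> ln Q powr - (c * cantor_dim) / 2 ^ (n + m - 1)"
  proof (rule divide_left_mono)
    have "(2::real) ^ (n + m - 1) = (3 ^ (n + m - 1)) powr cantor_dim"
      by (rule power_3_powr_cantor_dim[symmetric])
    also have "\<dots> \<le> Q powr cantor_dim" using Q cantor_dim_pos by (intro powr_mono2) auto
    finally show "(2::real) ^ (n + m - 1) \<le> Q powr cantor_dim" .
  qed (use Q in auto)
  finally have "2 ^ (n + m) / 2 ^ K \<le> 4 * ln Q powr - (c * cantor_dim)"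
    using m by (cases "n + m") (auto simp: field_simps)
  then show ?thesis
    using ln_period_denom_powr_le[OF m, of "c * cantor_dim" n] c cantor_dim_pos
    unfolding K_def Q_def by simp
qed

lemma hausdorff_not_badly_approx_ln_powr_null:
  assumes c: "2 < c * cantor_dim"
  shows "hausdorff cantor_dim {x \<in> cantor. \<not> badly_symb_approx (\<lambda>q. ln q powr - c) x} = 0"
proof (rule hausdorff_eq_0I)
  fix N :: nat and e :: real assume e: "0 < e"
  define \<psi> where "\<psi> = (\<lambda>q::real. ln q powr - c)"
  define p where "p = c * cantor_dim"
  have "0 < c * cantor_dim" using c by simp
  then have c0: "0 < c" using cantor_dim_pos by (simp add: zero_less_mult_iff)
  define a where "a j = (real j + 1) powr (- p / 2)" for j :: nat
  have "summable (\<lambda>n. real (Suc n) powr (- p / 2))"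
    using c unfolding p_def by (subst summable_Suc_iff) (simp add: summable_real_powr_iff)
  then have a: "summable a" unfolding a_def by (simp add: add.commute)
  define C where "C = 4 * ln 2 powr - p"
  have C: "0 \<le> C" unfolding C_def by simp
  obtain t where t: "\<And>M. (\<Sum>k<M. case prod_decode k of (n, m) \<Rightarrow>
      if t \<le> n \<or> t \<le> m then a n * a m else 0) \<le> e / (C + 1)"
    using double_series_tail_small[OF a _, of "e / (C + 1)"] e C unfolding a_def by auto
  define B where "B = ln 2 powr - c"
  obtain n1 where n1: "B * 3 ^ N < 3 ^ n1" using real_arch_pow[of 3 "B * 3 ^ N"] by auto
  have \<psi>_pos: "0 < \<psi> q" if "2 \<le> q" for q unfolding \<psi>_def using that by simp
  have \<psi>_le: "\<psi> q \<le> B" if "2 \<le> q" for q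
    unfolding \<psi>_def B_def using that c0 by (intro powr_mono2') auto
  have fine: "approx_radius \<psi> n m \<le> 1 / 3 ^ N"
    if "1 \<le> m" "t + 1 + n1 \<le> n \<or> t + 1 + n1 \<le> m" for n m
    using approx_radius_le_inverse_power_3[where \<psi> = \<psi>, OF that(1) \<psi>_le _ n1] that by (auto simp: B_def)
  have summand_le: "(case prod_decode k of (n, m) \<Rightarrow> if t + 1 + n1 \<le> n \<or> t + 1 + n1 \<le> Suc m
      then 2 ^ (n + Suc m) / 2 ^ triadic_level (approx_radius \<psi> n (Suc m)) else 0)
      \<le> C * (case prod_decode k of (n, m) \<Rightarrow> if t \<le> n \<or> t \<le> m then a n * a m else 0)" for k
  proof -
    obtain n m where k: "prod_decode k = (n, m)" by fastforce
    have "approx_radius \<psi> n (Suc m) \<le> 1" if "t + 1 + n1 \<le> n \<or> t + 1 + n1 \<le> Suc m"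
      using fine[of "Suc m" n] that order_trans[of _ "1 / 3 ^ N :: real" 1] by simp
    then show ?thesis
      using ln_powr_cylinder_ratio_le[of "Suc m" c n] c0 C unfolding k C_def a_def p_def \<psi>_def
      by (auto simp: mult_ac add_ac)
  qed
  have "hausdorff_pre cantor_dim (1 / 3 ^ N) {x \<in> cantor. \<not> badly_symb_approx \<psi> x} \<le> ennreal e"
  proof (rule hausdorff_pre_not_badly_approx_le[OF \<psi>_pos \<psi>_le fine])
    fix M
    have "(\<Sum>k<M. case prod_decode k of (n, m) \<Rightarrow> if t + 1 + n1 \<le> n \<or> t + 1 + n1 \<le> Suc m
        then 2 ^ (n + Suc m) / 2 ^ triadic_level (approx_radius \<psi> n (Suc m)) else 0)
        \<le> C * (\<Sum>k<M. case prod_decode k of (n, m) \<Rightarrow> if t \<le> n \<or> t \<le> m then a n * a m else 0)"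
      unfolding sum_distrib_left by (intro sum_mono summand_le)
    also have "\<dots> \<le> C * (e / (C + 1))" using t C by (rule mult_left_mono)
    also have "\<dots> \<le> e" using C e by (simp add: field_simps)
    finally show "(\<Sum>k<M. case prod_decode k of (n, m) \<Rightarrow> if t + 1 + n1 \<le> n \<or> t + 1 + n1 \<le> Suc m
        then 2 ^ (n + Suc m) / 2 ^ triadic_level (approx_radius \<psi> n (Suc m)) else 0) \<le> e" .
  qed
  then show "hausdorff_pre cantor_dim (1 / 3 ^ N)
      {x \<in> cantor. \<not> badly_symb_approx (\<lambda>q. ln q powr - c) x} \<le> ennreal e"
    unfolding \<psi>_def .
qed

section \<open>Words without repeated blocks\<close>

definition block :: "real list \<Rightarrow> nat \<Rightarrow> nat \<Rightarrow> real list" where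
  "block xs a L = take L (drop a xs)"

definition distinct_blocks :: "real list \<Rightarrow> nat \<Rightarrow> bool" where
  "distinct_blocks xs L \<longleftrightarrow> (\<forall>a b. a < b \<longrightarrow> b + L \<le> length xs \<longrightarrow> block xs a L \<noteq> block xs b L)"

lemma block_take: "a + L \<le> p \<Longrightarrow> block (take p xs) a L = block xs a L"
  unfolding block_def by (simp add: drop_take min_def)

lemma block_append_left: "a + L \<le> length u \<Longrightarrow> block (u @ v) a L = block u a L"
  unfolding block_def by simp

lemma block_append_right: "length v = L \<Longrightarrow> block (u @ v) (length u) L = v"
  unfolding block_def by simp

lemma distinct_blocks_take: "distinct_blocks xs L \<Longrightarrow> distinct_blocks (take p xs) L"
  unfolding distinct_blocks_def by (auto simp: block_take)

lemma block_words: "xs \<in> words N \<Longrightarrow> a + L \<le> N \<Longrightarrow> block xs a L \<in> words L"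
  unfolding words_def block_def by (auto dest!: in_set_takeD in_set_dropD)

lemma card_extensions_le:
  assumes A: "A \<subseteq> words p"
  shows "card {ys \<in> words (p + d). take p ys \<in> A \<and> P ys} \<le> (\<Sum>u\<in>A. card {v \<in> words d. P (u @ v)})"
proof -
  have fA: "finite A" using A finite_words finite_subset by blast
  have "{ys \<in> words (p + d). take p ys \<in> A \<and> P ys} \<subseteq> (\<Union>u\<in>A. (\<lambda>v. u @ v) ` {v \<in> words d. P (u @ v)})"
  proof
    fix ys assume ys: "ys \<in> {ys \<in> words (p + d). take p ys \<in> A \<and> P ys}"
    have "drop p ys \<in> words d" using ys unfolding words_def by (auto dest: in_set_dropD)
    moreover have "P (take p ys @ drop p ys)" using ys by simp
    ultimately show "ys \<in> (\<Union>u\<in>A. (\<lambda>v. u @ v) ` {v \<in> words d. P (u @ v)})"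
      using ys by (intro UN_I[of "take p ys"]) (auto intro!: image_eqI[of _ _ "drop p ys"])
  qed
  then have "card {ys \<in> words (p + d). take p ys \<in> A \<and> P ys} \<le> card (\<Union>u\<in>A. (\<lambda>v. u @ v) ` {v \<in> words d. P (u @ v)})"
    by (rule card_mono[rotated]) (use fA finite_words in auto)
  also have "\<dots> \<le> (\<Sum>u\<in>A. card ((\<lambda>v. u @ v) ` {v \<in> words d. P (u @ v)}))"
    by (rule card_UN_le[OF fA])
  also have "\<dots> \<le> (\<Sum>u\<in>A. card {v \<in> words d. P (u @ v)})"
    by (rule sum_mono) (rule card_image_le, use finite_words in auto)
  finally show ?thesis .
qed

lemma card_extensions_le_power_2:
  assumes A: "A \<subseteq> words p"
  shows "card {ys \<in> words (p + d). take p ys \<in> A} \<le> card A * 2 ^ d"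
proof -
  have "card {ys \<in> words (p + d). take p ys \<in> A \<and> True} \<le> (\<Sum>u\<in>A. card {v \<in> words d. True})"
    by (rule card_extensions_le[OF A])
  also have "\<dots> = card A * 2 ^ d" using card_words by simp
  finally show ?thesis by simp
qed

lemma distinct_blocks_appendD: "distinct_blocks (u @ v) L \<Longrightarrow> distinct_blocks u L"
  using distinct_blocks_take[of "u @ v" L "length u"] by simp

lemma inj_on_block:
  assumes "distinct_blocks xs L" "L \<le> length xs"
  shows "inj_on (\<lambda>a. block xs a L) {0..length xs - L}"
proof (rule inj_onI)
  fix a b assume ab: "a \<in> {0..length xs - L}" "b \<in> {0..length xs - L}" "block xs a L = block xs b L"
  show "a = b"
  proof (rule ccontr)
    assume "a \<noteq> b"
    then obtain a' b' where "a' < b'" "b' \<le> length xs - L" "block xs a' L = block xs b' L"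
      using ab by (metis atLeastAtMost_iff linorder_neqE_nat)
    then show False using assms unfolding distinct_blocks_def by auto
  qed
qed

text \<open>Appending a block of length L to a word u of length p without creating a repetition
  rules out the p - L + 1 (distinct) blocks already occurring in u.\<close>
lemma card_distinct_blocks_append_le:
  assumes u: "u \<in> words p" and L: "1 \<le> L" "L \<le> p"
  shows "card {v \<in> words L. distinct_blocks (u @ v) L} \<le> 2 ^ L - (p - L + 1)"
proof (cases "distinct_blocks u L")
  case False
  then have "{v \<in> words L. distinct_blocks (u @ v) L} = {}" using distinct_blocks_appendD by blast
  then show ?thesis by (metis card.empty zero_le)
next
  case True
  have lu: "length u = p" using u unfolding words_def by auto
  define old where "old = (\<lambda>a. block u a L) ` {0..p - L}"
  have card_old: "card old = p - L + 1"
    unfolding old_def using card_image[OF inj_on_block[OF True]] lu L by simp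
  have old: "old \<subseteq> words L" unfolding old_def using u lu L by (auto intro!: block_words)
  have "{v \<in> words L. distinct_blocks (u @ v) L} \<subseteq> words L - old"
  proof
    fix v assume v: "v \<in> {v \<in> words L. distinct_blocks (u @ v) L}"
    have lv: "length v = L" using v unfolding words_def by auto
    have "v \<notin> old"
    proof
      assume "v \<in> old"
      then obtain a where a: "a \<in> {0..p - L}" and eq: "v = block u a L" unfolding old_def by auto
      have "block (u @ v) a L \<noteq> block (u @ v) (length u) L"
        using v a lu L lv unfolding distinct_blocks_def by auto
      moreover have "block (u @ v) (length u) L = v" by (rule block_append_right[OF lv])
      moreover have "block (u @ v) a L = block u a L" using a lu L by (intro block_append_left) auto
      ultimately show False using eq by simp
    qed
    then show "v \<in> words L - old" using v by auto
  qed
  then have "card {v \<in> words L. distinct_blocks (u @ v) L} \<le> card (words L - old)"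
    by (intro card_mono) (auto simp: finite_words)
  also have "\<dots> = 2 ^ L - (p - L + 1)"
    using card_Diff_subset[OF finite_subset[OF old finite_words] old] card_old card_words by simp
  finally show ?thesis .
qed

lemma card_distinct_blocks_extension_le:
  assumes A: "A \<subseteq> words p" and L: "1 \<le> L" "L \<le> p"
  shows "card {ys \<in> words (p + L). take p ys \<in> A \<and> distinct_blocks ys L} \<le> card A * (2 ^ L - (p - L + 1))"
proof -
  have "card {ys \<in> words (p + L). take p ys \<in> A \<and> distinct_blocks ys L}
      \<le> (\<Sum>u\<in>A. card {v \<in> words L. distinct_blocks (u @ v) L})"
    by (rule card_extensions_le[OF A])
  also have "\<dots> \<le> (\<Sum>u\<in>A. 2 ^ L - (p - L + 1))"
    using A L by (intro sum_mono card_distinct_blocks_append_le) auto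
  finally show ?thesis by simp
qed

lemma card_distinct_blocks_extensions_le:
  assumes A: "A \<subseteq> words K" and L: "1 \<le> L" "L \<le> K"
  shows "card {ys \<in> words (K + t * L). take K ys \<in> A \<and> distinct_blocks ys L} \<le> card A * (2 ^ L - (K - L + 1)) ^ t"
proof (induction t)
  case 0
  have "{ys \<in> words K. take K ys \<in> A \<and> distinct_blocks ys L} \<subseteq> A" unfolding words_def by auto
  then show ?case using card_mono finite_subset[OF A finite_words] by fastforce
next
  case (Suc t)
  define B where "B = {ys \<in> words (K + t * L). take K ys \<in> A \<and> distinct_blocks ys L}"
  have "{ys \<in> words (K + Suc t * L). take K ys \<in> A \<and> distinct_blocks ys L}
      \<subseteq> {ys \<in> words ((K + t * L) + L). take (K + t * L) ys \<in> B \<and> distinct_blocks ys L}"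
    unfolding B_def by (auto simp: algebra_simps take_words distinct_blocks_take min_def)
  then have "card {ys \<in> words (K + Suc t * L). take K ys \<in> A \<and> distinct_blocks ys L}
      \<le> card {ys \<in> words ((K + t * L) + L). take (K + t * L) ys \<in> B \<and> distinct_blocks ys L}"
    by (intro card_mono) (auto simp: finite_words)
  also have "\<dots> \<le> card B * (2 ^ L - (K + t * L - L + 1))"
    using L by (intro card_distinct_blocks_extension_le) (auto simp: B_def)
  also have "\<dots> \<le> card B * (2 ^ L - (K - L + 1))" by (intro mult_le_mono2 diff_le_mono2) simp
  also have "\<dots> \<le> card A * (2 ^ L - (K - L + 1)) ^ Suc t" using Suc.IH unfolding B_def by simp
  finally show ?case .
qed

lemma power_2_diff_le_exp:
  fixes d L T K :: nat
  assumes d: "d \<le> 2 ^ L" and K: "T * L \<le> K"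
  shows "real ((2 ^ L - d) ^ T * 2 ^ (K - T * L)) \<le> 2 ^ K * exp (- (real T * (real d / 2 ^ L)))"
proof -
  define y where "y = real d / 2 ^ L"
  have y: "0 \<le> y" "y \<le> 1" unfolding y_def using d by (auto simp: of_nat_le_iff[symmetric])
  have "real (2 ^ L - d) = 2 ^ L * (1 - y)" unfolding y_def using d by (simp add: of_nat_diff field_simps)
  then have "real ((2 ^ L - d) ^ T * 2 ^ (K - T * L)) = 2 ^ (T * L + (K - T * L)) * (1 - y) ^ T"
    by (simp add: power_mult_distrib power_add power_mult mult.commute)
  also have "\<dots> = 2 ^ K * (1 - y) ^ T" using K by simp
  also have "\<dots> \<le> 2 ^ K * exp (- y) ^ T"
    using y exp_ge_add_one_self[of "- y"] by (intro mult_left_mono power_mono) auto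
  also have "\<dots> = 2 ^ K * exp (- (real T * y))" by (simp add: exp_of_nat_mult[symmetric])
  finally show ?thesis unfolding y_def .
qed

text \<open>Doubling a word of length K while avoiding repeated blocks of length L: the K new digits
  are chosen in K div L rounds of L digits, each avoiding at least K - L + 1 old blocks.\<close>
lemma card_distinct_blocks_doubling_le:
  assumes A: "A \<subseteq> words K" and L: "1 \<le> L" "2 * L \<le> K" "K < 2 ^ L"
  shows "real (card {ys \<in> words (2 * K). take K ys \<in> A \<and> distinct_blocks ys L})
    \<le> real (card A) * 2 ^ K * exp (- (real (K div L) * ((real K - real L + 1) / 2 ^ L)))"
proof -
  define T where "T = K div L"
  have TL: "T * L \<le> K" unfolding T_def by (simp add: div_times_less_eq_dividend)
  define B where "B = {ys \<in> words (K + T * L). take K ys \<in> A \<and> distinct_blocks ys L}"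
  have "{ys \<in> words (2 * K). take K ys \<in> A \<and> distinct_blocks ys L}
      \<subseteq> {ys \<in> words ((K + T * L) + (K - T * L)). take (K + T * L) ys \<in> B}"
    unfolding B_def using TL by (auto simp: take_words distinct_blocks_take min_def mult_2)
  then have "card {ys \<in> words (2 * K). take K ys \<in> A \<and> distinct_blocks ys L}
      \<le> card {ys \<in> words ((K + T * L) + (K - T * L)). take (K + T * L) ys \<in> B}"
    by (intro card_mono) (auto simp: finite_words)
  also have "\<dots> \<le> card B * 2 ^ (K - T * L)"
    by (rule card_extensions_le_power_2) (auto simp: B_def)
  also have "\<dots> \<le> card A * (2 ^ L - (K - L + 1)) ^ T * 2 ^ (K - T * L)"
    using card_distinct_blocks_extensions_le[OF A L(1)] L(2) unfolding B_def by simp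
  finally have "real (card {ys \<in> words (2 * K). take K ys \<in> A \<and> distinct_blocks ys L})
      \<le> real (card A) * real ((2 ^ L - (K - L + 1)) ^ T * 2 ^ (K - T * L))"
    by (simp only: of_nat_le_iff of_nat_mult[symmetric] mult.assoc)
  also have "\<dots> \<le> real (card A) * (2 ^ K * exp (- (real T * (real (K - L + 1) / 2 ^ L))))"
    using L TL by (intro mult_left_mono power_2_diff_le_exp) auto
  finally show ?thesis using L unfolding T_def by (simp add: of_nat_diff mult.assoc add_ac)
qed

definition no_repeat_words :: "nat \<Rightarrow> nat \<Rightarrow> real list set" where
  "no_repeat_words c J =
     {ys \<in> words (2 ^ (J + 1)). \<forall>j\<le>J. distinct_blocks (take (2 ^ (j + 1)) ys) (2 * j + c)}"

text \<open>The exponent by which the density of no_repeat_words c drops from level j - 1 to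
  level j; it is harmonic in j once the blocks are short compared with the word.\<close>
definition block_decay :: "nat \<Rightarrow> nat \<Rightarrow> real" where
  "block_decay c j =
     (if 2 * (2 * j + c) \<le> 2 ^ j then 1 / (2 ^ (c + 2) * (2 * real j + real c)) else 0)"

lemma block_decay_nonneg: "0 \<le> block_decay c j"
  unfolding block_decay_def by simp

lemma block_decay_le:
  assumes c: "1 \<le> c" and short: "2 * (2 * j + c) \<le> 2 ^ j"
  shows "block_decay c j \<le> real (2 ^ j div (2 * j + c)) * ((real (2 ^ j) - real (2 * j + c) + 1) / 2 ^ (2 * j + c))"
proof -
  define K :: nat where "K = 2 ^ j"
  define L :: nat where "L = 2 * j + c"
  have L0: "0 < real L" unfolding L_def using c by simp
  have "real (2 * L) \<le> real K" using short unfolding K_def L_def by (simp only: of_nat_le_iff)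
  then have KL: "2 * real L \<le> real K" by simp
  have "K < K div L * L + L" using div_mult_mod_eq[of K L] mod_less_divisor[of L K] L0 by linarith
  then have "real K < real (K div L * L + L)" by (simp only: of_nat_less_iff)
  then have "real K < real (K div L) * real L + real L" by simp
  then have "real K / (2 * real L) \<le> real (K div L)" using KL L0 by (simp add: field_simps)
  moreover have "real K / 2 \<le> real K - real L + 1" using KL by linarith
  ultimately have "(real K / (2 * real L)) * ((real K / 2) / 2 ^ L)
      \<le> real (K div L) * ((real K - real L + 1) / 2 ^ L)"
    using L0 by (intro mult_mono divide_right_mono) auto
  moreover have "(real K / (2 * real L)) * ((real K / 2) / 2 ^ L) = block_decay c j"
  proof -
    define P :: real where "P = 2 ^ (2 * j)"
    have KK: "real K * real K = P" unfolding K_def P_def by (simp add: power_add[symmetric] mult_2)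
    have PL: "(2::real) ^ L = P * 2 ^ c" unfolding L_def P_def by (simp add: power_add)
    have "(real K / (2 * real L)) * ((real K / 2) / 2 ^ L) = (real K * real K) / (4 * real L * 2 ^ L)"
      by (simp add: field_simps)
    also have "\<dots> = 1 / (4 * real L * 2 ^ c)"
      unfolding KK PL using L0 by (simp add: P_def field_simps)
    also have "\<dots> = block_decay c j"
      using short unfolding block_decay_def L_def by (simp add: power_add algebra_simps)
    finally show ?thesis .
  qed
  ultimately show ?thesis unfolding K_def L_def by simp
qed

lemma no_repeat_words_Suc_subset:
  "no_repeat_words c (Suc J) \<subseteq>
     {ys \<in> words (2 * 2 ^ (J + 1)). take (2 ^ (J + 1)) ys \<in> no_repeat_words c J \<and>
        distinct_blocks ys (2 * Suc J + c)}"
proof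
  fix ys assume ys: "ys \<in> no_repeat_words c (Suc J)"
  then have ys_words: "ys \<in> words (2 * 2 ^ (J + 1))" and len: "length ys = 2 * 2 ^ (J + 1)"
    unfolding no_repeat_words_def words_def by auto
  have "take (2 ^ (j + 1)) (take (2 ^ (J + 1)) ys) = take (2 ^ (j + 1)) ys" if "j \<le> J" for j
    using power_increasing[of "j + 1" "J + 1" "2::nat"] that by (simp add: min_def)
  then have "take (2 ^ (J + 1)) ys \<in> no_repeat_words c J"
    using ys take_words[OF ys_words] unfolding no_repeat_words_def by auto
  moreover have "distinct_blocks ys (2 * Suc J + c)"
    using ys len unfolding no_repeat_words_def by auto
  ultimately show "ys \<in> {ys \<in> words (2 * 2 ^ (J + 1)). take (2 ^ (J + 1)) ys \<in> no_repeat_words c J \<and>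
      distinct_blocks ys (2 * Suc J + c)}" using ys_words by blast
qed

lemma card_no_repeat_words_Suc_le:
  assumes c: "1 \<le> c"
  shows "real (card (no_repeat_words c (Suc J)))
    \<le> 2 ^ 2 ^ (J + 1) * real (card (no_repeat_words c J)) * exp (- block_decay c (Suc J))"
proof -
  define K :: nat where "K = 2 ^ (J + 1)"
  define L where "L = 2 * Suc J + c"
  have A: "no_repeat_words c J \<subseteq> words K" unfolding no_repeat_words_def K_def by auto
  have "card (no_repeat_words c (Suc J))
      \<le> card {ys \<in> words (2 * K). take K ys \<in> no_repeat_words c J \<and> distinct_blocks ys L}"
    using no_repeat_words_Suc_subset unfolding K_def L_def by (intro card_mono) (auto simp: finite_words)
  then have le: "real (card (no_repeat_words c (Suc J)))
      \<le> real (card {ys \<in> words (2 * K). take K ys \<in> no_repeat_words c J \<and> distinct_blocks ys L})"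
    by simp
  show ?thesis
  proof (cases "2 * L \<le> K")
    case True
    have "K < 2 ^ L" unfolding K_def L_def using c by (intro power_strict_increasing) auto
    then have "real (card {ys \<in> words (2 * K). take K ys \<in> no_repeat_words c J \<and> distinct_blocks ys L})
        \<le> real (card (no_repeat_words c J)) * 2 ^ K * exp (- (real (K div L) * ((real K - real L + 1) / 2 ^ L)))"
      using c True by (intro card_distinct_blocks_doubling_le[OF A]) (auto simp: L_def)
    also have "\<dots> \<le> real (card (no_repeat_words c J)) * 2 ^ K * exp (- block_decay c (Suc J))"
      using block_decay_le[OF c, of "Suc J"] True unfolding K_def L_def by (intro mult_left_mono) auto
    finally show ?thesis using le unfolding K_def by (simp add: mult_ac)
  next
    case False
    then have zero: "block_decay c (Suc J) = 0" unfolding block_decay_def K_def L_def by simp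
    have "card {ys \<in> words (2 * K). take K ys \<in> no_repeat_words c J \<and> distinct_blocks ys L}
        \<le> card {ys \<in> words (K + K). take K ys \<in> no_repeat_words c J}"
      by (intro card_mono) (auto simp: finite_words mult_2)
    also have "\<dots> \<le> card (no_repeat_words c J) * 2 ^ K" by (rule card_extensions_le_power_2[OF A])
    finally have "real (card {ys \<in> words (2 * K). take K ys \<in> no_repeat_words c J \<and> distinct_blocks ys L})
        \<le> real (card (no_repeat_words c J) * 2 ^ K)" by (simp only: of_nat_le_iff)
    then show ?thesis using le zero unfolding K_def by (simp add: mult.commute)
  qed
qed

lemma card_no_repeat_words_le:
  assumes c: "1 \<le> c"
  shows "real (card (no_repeat_words c J)) \<le> 2 ^ 2 ^ (J + 1) * exp (- (\<Sum>j\<le>J. block_decay c j))"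
proof (induction J)
  case 0
  have "card (no_repeat_words c 0) \<le> card (words 2)"
    by (rule card_mono) (auto simp: no_repeat_words_def finite_words)
  moreover have "block_decay c 0 = 0" using c unfolding block_decay_def by simp
  ultimately show ?case using card_words[of 2] by simp
next
  case (Suc J)
  have "real (card (no_repeat_words c (Suc J)))
      \<le> 2 ^ 2 ^ (J + 1) * real (card (no_repeat_words c J)) * exp (- block_decay c (Suc J))"
    by (rule card_no_repeat_words_Suc_le[OF c])
  also have "\<dots> \<le> 2 ^ 2 ^ (J + 1) * (2 ^ 2 ^ (J + 1) * exp (- (\<Sum>j\<le>J. block_decay c j)))
      * exp (- block_decay c (Suc J))"
    using Suc.IH by (intro mult_right_mono mult_left_mono) auto
  also have "\<dots> = 2 ^ 2 ^ (Suc J + 1) * exp (- (\<Sum>j\<le>Suc J. block_decay c j))"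
    by (simp add: exp_add[symmetric] power_add[symmetric] mult_2[symmetric] algebra_simps)
  finally show ?case .
qed

lemma block_decay_sum_unbounded:
  assumes c: "1 \<le> c"
  shows "\<exists>J. B \<le> (\<Sum>j\<le>J. block_decay c j)"
proof (rule ccontr)
  assume "\<not> ?thesis"
  then have "summable (block_decay c)"
    by (intro bounded_imp_summable[of _ B] block_decay_nonneg) (auto simp: not_le less_imp_le)
  moreover have "norm (inverse (real j) / (2 ^ (c + 2) * (2 + real c))) \<le> block_decay c j"
    if j: "2 * c + 6 \<le> j" for j
  proof -
    have short: "2 * (2 * j + c) \<le> 2 ^ j"
      using j
    proof (induction j rule: dec_induct)
      case base
      have "1 + c \<le> (4::nat) ^ c" by (induction c) auto
      then show ?case by (simp add: power_add power_mult)
    next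
      case (step j)
      have "(4::nat) \<le> 2 ^ j" using power_increasing[of 2 j "2::nat"] step by simp
      then show ?case using step by simp
    qed
    have "real c * 1 \<le> real c * real j" using j by (intro mult_left_mono) auto
    then have "2 * real j + real c \<le> real j * (2 + real c)" by (simp add: algebra_simps)
    have "0 < real j" using j by simp
    then have "norm (inverse (real j) / (2 ^ (c + 2) * (2 + real c)))
        = 1 / (2 ^ (c + 2) * (real j * (2 + real c)))" by (simp add: field_simps)
    also have "\<dots> \<le> 1 / (2 ^ (c + 2) * (2 * real j + real c))"
      using \<open>2 * real j + real c \<le> real j * (2 + real c)\<close> j
      by (intro divide_left_mono mult_left_mono mult_pos_pos) auto
    also have "\<dots> = block_decay c j" using short unfolding block_decay_def by simp
    finally show ?thesis .
  qed
  ultimately have "summable (\<lambda>j. inverse (real j) / (2 ^ (c + 2) * (2 + real c)))"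
    by (rule summable_comparison_test'[of "block_decay c" "2 * c + 6"])
  then have "summable (\<lambda>j. inverse (real j))" by (simp add: summable_divide_iff)
  then show False using not_summable_harmonic by blast
qed

lemma card_no_repeat_words_small:
  assumes c: "1 \<le> c" and \<eta>: "0 < \<eta>"
  shows "\<exists>J. N \<le> J \<and> real (card (no_repeat_words c J)) \<le> 2 ^ 2 ^ (J + 1) * \<eta>"
proof -
  obtain J' where J': "- ln \<eta> \<le> (\<Sum>j\<le>J'. block_decay c j)" using block_decay_sum_unbounded[OF c] by blast
  define J where "J = max J' N"
  have "(\<Sum>j\<le>J'. block_decay c j) \<le> (\<Sum>j\<le>J. block_decay c j)"
    by (rule sum_mono2) (auto simp: J_def block_decay_nonneg)
  then have "exp (- (\<Sum>j\<le>J. block_decay c j)) \<le> exp (ln \<eta>)" using J' by simp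
  then have "real (card (no_repeat_words c J)) \<le> 2 ^ 2 ^ (J + 1) * \<eta>"
    using card_no_repeat_words_le[OF c, of J] \<eta> by (simp add: order_trans mult_left_mono)
  then show ?thesis unfolding J_def by (intro exI[of _ "max J' N"]) simp
qed

section \<open>Badly approximable points\<close>

lemma power_2_powr_2_div_cantor_dim: "(2 ^ N :: real) powr (2 / cantor_dim) = 3 ^ (2 * N)"
proof -
  have "(2 ^ N :: real) powr (2 / cantor_dim) = exp (real (2 * N) * ln 3)"
    unfolding powr_def cantor_dim_def by (simp add: ln_realpow field_simps)
  also have "\<dots> = 3 ^ (2 * N)" by (simp only: exp_of_nat_mult) simp
  finally show ?thesis .
qed

lemma repeated_block_periodic_coding:
  assumes w: "is_coding \<omega>" and ab: "a < b" and rep: "\<And>s. s < L \<Longrightarrow> \<omega> (a + s) = \<omega> (b + s)"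
  shows "\<exists>\<rho>. is_coding \<rho> \<and> periodic_from \<rho> a (b - a) \<and> (\<forall>i < b + L. \<rho> i = \<omega> i)"
proof (intro exI conjI allI impI)
  define m where "m = b - a"
  have m: "1 \<le> m" unfolding m_def using ab by simp
  define \<rho> where "\<rho> i = (if i < a then \<omega> i else \<omega> (a + (i - a) mod m))" for i
  show "is_coding \<rho>" using w unfolding is_coding_def \<rho>_def by auto
  show p: "periodic_from \<rho> a (b - a)" unfolding periodic_from_def m_def[symmetric]
  proof (intro conjI allI impI)
    fix i assume "a \<le> i"
    then have "i + m - a = (i - a) + m" by simp
    then have "(i + m - a) mod m = (i - a) mod m" by simp
    then show "\<rho> (i + m) = \<rho> i" unfolding \<rho>_def using \<open>a \<le> i\<close> by auto
  qed (rule m)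
  show "\<rho> i = \<omega> i" if "i < b + L" for i
    using that
  proof (induction i rule: less_induct)
    case (less i)
    consider "i < b" | "b \<le> i" by linarith
    then show ?case
    proof cases
      case 1
      then show ?thesis unfolding \<rho>_def m_def by auto
    next
      case 2
      then have i: "i - m < i" "a \<le> i - m" "i - m = a + (i - b)" "i - m + m = i"
        using ab m unfolding m_def by auto
      then have "\<rho> i = \<rho> (i - m)" using p unfolding periodic_from_def m_def by metis
      also have "\<dots> = \<omega> (a + (i - b))" using less.IH[OF i(1)] less.prems i(3) by simp
      also have "\<dots> = \<omega> i" using rep[of "i - b"] less.prems 2 by simp
      finally show ?thesis .
    qed
  qed
qed

text \<open>The periodic point is within 3^-(a+m+L) of x, while its intrinsic denominator is at
  most 3^(a+m).\<close>
lemma badly_approx_periodic_agreement_le: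
  fixes \<epsilon> :: real
  assumes x: "x \<in> cantor" and eps: "0 < \<epsilon>"
    and bad: "\<And>r. r \<in> \<rat> \<inter> cantor \<Longrightarrow>
        \<epsilon> * ln (real (q_int r)) powr - (2 / cantor_dim) / real (q_int r) \<le> \<bar>x - r\<bar>"
    and \<rho>: "is_coding \<rho>" "periodic_from \<rho> a m"
    and agree: "\<And>i. i < a + m + L \<Longrightarrow> \<rho> i = coding_of x i"
  shows "\<epsilon> * 3 ^ L \<le> (real (a + m) * ln 3) powr (2 / cantor_dim)"
proof -
  define r where "r = coding_point \<rho>"
  define q where "q = real (q_int r)"
  define c where "c = 2 / cantor_dim"
  define b where "b = a + m"
  have c: "0 < c" unfolding c_def using cantor_dim_pos by simp
  have b: "1 \<le> b" using \<rho>(2) unfolding b_def periodic_from_def by simp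
  have r: "r \<in> \<rat> \<inter> cantor"
    unfolding r_def using periodic_coding_point_rational[OF \<rho>] coding_point_in_cantor[OF \<rho>(1)] by simp
  have "2 \<le> q"
    using period_denom_ge_2 preperiod_min_period(1)[OF \<rho>(2)] q_int_coding_point[OF \<rho>(1)]
    unfolding q_def r_def periodic_from_def by simp
  moreover have "q \<le> 3 ^ b"
    using q_int_le_3_power[OF \<rho>] unfolding q_def r_def b_def by simp
  ultimately have "ln q \<le> real b * ln 3" "0 < ln q" "0 < q"
    using ln_le_cancel_iff[of q "3 ^ b"] by (auto simp: ln_realpow)
  then have "\<epsilon> * (real b * ln 3) powr - c / 3 ^ b \<le> \<epsilon> * ln q powr - c / q"
    using \<open>q \<le> 3 ^ b\<close> eps c by (intro frac_le mult_left_mono powr_mono2') auto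
  also have "\<dots> \<le> \<bar>x - r\<bar>" using bad[OF r] unfolding q_def c_def .
  also have "\<dots> \<le> 1 / 3 ^ (b + L)"
    using coding_point_dist_le[OF coding_of_cantor[THEN conjunct1, OF x] \<rho>(1), of "b + L"] agree
      coding_of_cantor[OF x] unfolding r_def b_def by (simp add: abs_minus_commute)
  finally have "\<epsilon> * (real b * ln 3) powr - c / 3 ^ b \<le> 1 / 3 ^ (b + L)" .
  then have "\<epsilon> * 3 ^ L * (real b * ln 3) powr - c \<le> 1"
    by (simp add: field_simps power_add)
  then show ?thesis
    using b unfolding c_def[symmetric] b_def[symmetric] by (simp add: powr_minus field_simps)
qed

text \<open>A repetition at positions a < b \<le> 2^(j+1) gives a periodic point with
  eps 3^L \<le> (b log 3)^(2/dim) \<le> 3^(2j+4).\<close>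
lemma badly_approx_distinct_blocks:
  fixes \<epsilon> :: real
  assumes x: "x \<in> cantor" and eps: "0 < \<epsilon>"
    and bad: "\<And>r. r \<in> \<rat> \<inter> cantor \<Longrightarrow>
        \<epsilon> * ln (real (q_int r)) powr - (2 / cantor_dim) / real (q_int r) \<le> \<bar>x - r\<bar>"
    and c: "1 < \<epsilon> * 3 ^ c"
  shows "distinct_blocks (map (coding_of x) [0..<2 ^ (j + 1)]) (2 * j + 4 + c)"
proof (rule ccontr)
  define L where "L = 2 * j + 4 + c"
  define xs where "xs = map (coding_of x) [0..<2 ^ (j + 1)]"
  assume "\<not> distinct_blocks (map (coding_of x) [0..<2 ^ (j + 1)]) (2 * j + 4 + c)"
  then obtain a b where ab: "a < b" "b + L \<le> 2 ^ (j + 1)" and blocks: "block xs a L = block xs b L"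
    unfolding distinct_blocks_def xs_def L_def by auto
  have "coding_of x (a + s) = coding_of x (b + s)" if "s < L" for s
    using arg_cong[OF blocks, of "\<lambda>ys. ys ! s"] ab that unfolding block_def xs_def by simp
  then obtain \<rho> where \<rho>: "is_coding \<rho>" "periodic_from \<rho> a (b - a)"
    and agree: "\<And>i. i < b + L \<Longrightarrow> \<rho> i = coding_of x i"
    using repeated_block_periodic_coding[OF coding_of_cantor[THEN conjunct1, OF x] ab(1)] by blast
  have "\<epsilon> * 3 ^ L \<le> (real b * ln 3) powr (2 / cantor_dim)"
    using badly_approx_periodic_agreement_le[OF x eps bad \<rho>] agree ab(1) by simp
  also have "\<dots> \<le> (2 ^ (j + 2)) powr (2 / cantor_dim)"
  proof (rule powr_mono2)
    have "b \<le> 2 ^ (j + 1)" using ab(2) by simp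
    then have "real b \<le> real ((2::nat) ^ (j + 1))" by (simp only: of_nat_le_iff)
    then have "real b \<le> 2 ^ (j + 1)" by simp
    moreover have "ln (3::real) \<le> 2" using ln_le_minus_one[of 3] by simp
    ultimately have "real b * ln 3 \<le> 2 ^ (j + 1) * 2" by (intro mult_mono) auto
    then show "real b * ln 3 \<le> 2 ^ (j + 2)" by simp
  qed (use cantor_dim_pos in auto)
  also have "\<dots> = 3 ^ (2 * j + 4)"
    using power_2_powr_2_div_cantor_dim[of "j + 2"] by (simp add: algebra_simps power_add)
  also have "\<dots> < \<epsilon> * 3 ^ L" using c unfolding L_def by (simp add: power_add)
  finally show False by simp
qed

lemma badly_approx_prefixes_no_repeat:
  assumes x: "x \<in> cantor" and bad: "badly_symb_approx (\<lambda>q. ln q powr - (2 / cantor_dim)) x"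
  shows "\<exists>c. \<forall>J. map (coding_of x) [0..<2 ^ (J + 1)] \<in> no_repeat_words (Suc c) J"
proof -
  obtain \<epsilon> where eps: "0 < \<epsilon>" and bad': "\<And>r. r \<in> \<rat> \<inter> cantor \<Longrightarrow>
      \<epsilon> * ln (real (q_int r)) powr - (2 / cantor_dim) / real (q_int r) \<le> \<bar>x - r\<bar>"
    using bad unfolding badly_symb_approx_def by blast
  obtain c where "inverse \<epsilon> < 3 ^ c" using real_arch_pow[of 3 "inverse \<epsilon>"] by auto
  then have c: "1 < \<epsilon> * 3 ^ c" using eps by (simp add: field_simps)
  have "map (coding_of x) [0..<2 ^ (J + 1)] \<in> no_repeat_words (Suc (c + 3)) J" for J
    unfolding no_repeat_words_def
  proof (intro CollectI conjI allI impI)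
    show "map (coding_of x) [0..<2 ^ (J + 1)] \<in> words (2 ^ (J + 1))"
      using coding_of_cantor[OF x] unfolding words_def is_coding_def by auto
    fix j assume "j \<le> J"
    then have "(2::nat) ^ (j + 1) \<le> 2 ^ (J + 1)" by (intro power_increasing) auto
    then show "distinct_blocks (take (2 ^ (j + 1)) (map (coding_of x) [0..<2 ^ (J + 1)])) (2 * j + Suc (c + 3))"
      using badly_approx_distinct_blocks[OF x eps bad' c, of j] by (simp add: take_map min_def add.assoc)
  qed
  then show ?thesis by blast
qed

text \<open>For each c the words without short repetitions have density at most e 2^-(k+1) at a
  suitable level; letting the k-th stage of the cover use c = k + 1 covers every badly
  approximable point.\<close>
lemma hausdorff_badly_approx_ln_powr_null:
  "hausdorff cantor_dim {x \<in> cantor. badly_symb_approx (\<lambda>q. ln q powr - (2 / cantor_dim)) x} = 0"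
proof (rule hausdorff_eq_0I)
  fix N :: nat and e :: real assume e: "0 < e"
  have "\<exists>J. N \<le> J \<and> real (card (no_repeat_words (Suc k) J)) \<le> 2 ^ (2 ^ (J + 1)) * (e / 2 ^ (k + 1))" for k
    using e by (intro card_no_repeat_words_small) auto
  then obtain J where J: "\<And>k. N \<le> J k"
    and card: "\<And>k. real (card (no_repeat_words (Suc k) (J k))) \<le> 2 ^ (2 ^ (J k + 1)) * (e / 2 ^ (k + 1))"
    by metis
  show "hausdorff_pre cantor_dim (1 / 3 ^ N)
      {x \<in> cantor. badly_symb_approx (\<lambda>q. ln q powr - (2 / cantor_dim)) x} \<le> ennreal e"
  proof (rule hausdorff_pre_le_cylinder_cover[of "\<lambda>k. no_repeat_words (Suc k) (J k)" "\<lambda>k. 2 ^ (J k + 1)"])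
    show "finite (no_repeat_words (Suc k) (J k))" for k
      unfolding no_repeat_words_def using finite_words by simp
    show "1 / 3 ^ 2 ^ (J k + 1) \<le> (1 / 3 ^ N :: real)" for k
      using J[of k] less_exp[of "J k + 1"] by (intro divide_left_mono power_increasing) auto
    show "\<exists>k. map (coding_of x) [0..<2 ^ (J k + 1)] \<in> no_repeat_words (Suc k) (J k)"
      if "x \<in> {x \<in> cantor. badly_symb_approx (\<lambda>q. ln q powr - (2 / cantor_dim)) x}" for x
      using badly_approx_prefixes_no_repeat that by blast
    show "(\<Sum>k<M. real (card (no_repeat_words (Suc k) (J k))) / 2 ^ 2 ^ (J k + 1)) \<le> e" for M
    proof -
      have "(\<Sum>k<M. real (card (no_repeat_words (Suc k) (J k))) / 2 ^ 2 ^ (J k + 1)) \<le> (\<Sum>k<M. e / 2 ^ (k + 1))"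
        using card by (intro sum_mono) (simp add: field_simps)
      also have "\<dots> = e * (1 - 1 / 2 ^ M)"
        by (induction M) (auto simp: field_simps)
      also have "\<dots> \<le> e" using e by (simp add: mult_left_le)
      finally show ?thesis .
    qed
  qed auto
qed

theorem corollary4p6:
  shows "(\<forall>\<epsilon>>0. mu_ae (\<lambda>x. badly_symb_approx
            (\<lambda>q. ln q powr (- (2 / cantor_dim + \<epsilon>))) x))
       \<and> mu_ae (\<lambda>x. symb_well_approx (\<lambda>q. ln q powr (- (2 / cantor_dim))) x)"
proof
  show "\<forall>\<epsilon>>0. mu_ae (\<lambda>x. badly_symb_approx (\<lambda>q. ln q powr (- (2 / cantor_dim + \<epsilon>))) x)"
  proof (intro allI impI)
    fix \<epsilon> :: real assume "0 < \<epsilon>"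
    then have "2 < (2 / cantor_dim + \<epsilon>) * cantor_dim"
      using cantor_dim_pos by (simp add: field_simps)
    then show "mu_ae (\<lambda>x. badly_symb_approx (\<lambda>q. ln q powr (- (2 / cantor_dim + \<epsilon>))) x)"
      by (intro mu_ae_if_hausdorff_null hausdorff_not_badly_approx_ln_powr_null)
  qed
  show "mu_ae (\<lambda>x. symb_well_approx (\<lambda>q. ln q powr (- (2 / cantor_dim))) x)"
    using hausdorff_badly_approx_ln_powr_null unfolding symb_well_approx_def
    by (intro mu_ae_if_hausdorff_null) simp
qed

end
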